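(* Assume the setting, Assumptions 1–2 and the FedAvg algorithm of the context, with $T$ a multiple of $I$, stepsize $\eta=\sqrt{bK/T}$, and $T\ge81L^2I^2bK$. Then for any $b\ge1$ and $I\ge1$, $$\mathbb{E}\|\nabla f(\bar x_a)\|^2\le\frac{2(f(\bar x_1)-f^\ast)}{(bK)^{1/2}T^{1/2}}+\frac{2L\sigma^2}{(bK)^{1/2}T^{1/2}}+\frac{3L^2bK(I-1)}{T}\sigma^2+\frac{5L^2bK(I-1)^2}{T}\zeta^2.$$
   Context: Setting: $K\ge1$ worker nodes. For each $k$, $f^{(k)}(x)=\mathbb{E}_{\xi\sim\mathcal{D}^{(k)}}[f^{(k)}(x;\xi)]$. The objective is $f=\frac1K\sum_kf^{(k)}$, with $f^\ast=\inf f>-\infty$. Assumption 1: $\mathbb{E}\|\nabla f^{(k)}(x;\xi)-\nabla f^{(k)}(y;\xi)\|^2\le L^2\|x-y\|^2$. Assumption 2: $\mathbb{E}[\nabla f^{(k)}(x;\xi)]=\nabla f^{(k)}(x)$, $\mathbb{E}\|\nabla f^{(k)}(x;\xi)-\nabla f^{(k)}(x)\|^2\le\sigma^2$, and $\|\nabla f^{(k)}(x)-\nabla f^{(\ell)}(x)\|^2\le\zeta^2$. Samples are i.i.d., independent across nodes and of the past. FedAvg algorithm. Initialization: $x_1^{(k)}=\bar x_1$ for all $k$. For $t=1,\dots,T$: $d_t^{(k)}=\frac1b\sum_{\xi\in\mathcal{B}_t^{(k)}}\nabla f^{(k)}(x_t^{(k)};\xi)$ with a fresh size-$b$ minibatch,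 and $x_{t+1}^{(k)}=x_t^{(k)}-\eta d_t^{(k)}$. If $t\bmod I=0$, replace $x_{t+1}^{(k)}$ by $\bar x_{t+1}=\frac1K\sum_jx_{t+1}^{(j)}$ for all $k$. Here $\bar x_t=\frac1K\sum_kx_t^{(k)}$. Output: $\bar x_a$, uniform on $\{\bar x_t\}_{t=1}^T$. *)

theory Defs
  imports "HOL-Probability.Probability"
begin

text \<open>Local iterates of FedAvg for a fixed realization xi of the samples.
  fedavg_local G K b eta I x1 xi n k is the local iterate of node k at time n+1,
  i.e. x_{n+1}^{(k)}.\<close>

primrec fedavg_local ::
  "(nat \<Rightarrow> 'a::euclidean_space \<Rightarrow> 'b \<Rightarrow> 'a) \<Rightarrow> nat \<Rightarrow> nat \<Rightarrow> real \<Rightarrow> nat \<Rightarrow> 'a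
    \<Rightarrow> (nat \<Rightarrow> nat \<Rightarrow> nat \<Rightarrow> 'b) \<Rightarrow> nat \<Rightarrow> nat \<Rightarrow> 'a" where
  "fedavg_local G K b eta I x1 xi 0 = (\<lambda>k. x1)"
| "fedavg_local G K b eta I x1 xi (Suc n) =
     (let t = Suc n;
          xt = fedavg_local G K b eta I x1 xi n;
          d = (\<lambda>k. (1 / real b) *\<^sub>R (\<Sum>j<b. G k (xt k) (xi t k j)));
          y = (\<lambda>k. xt k - eta *\<^sub>R d k)
      in if t mod I = 0 then (\<lambda>k. (1 / real K) *\<^sub>R (\<Sum>l<K. y l)) else y)"

definition fedavg_avg ::
  "(nat \<Rightarrow> 'a::euclidean_space \<Rightarrow> 'b \<Rightarrow> 'a) \<Rightarrow> nat \<Rightarrow> nat \<Rightarrow> real \<Rightarrow> nat \<Rightarrow> 'a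
    \<Rightarrow> (nat \<Rightarrow> nat \<Rightarrow> nat \<Rightarrow> 'b) \<Rightarrow> nat \<Rightarrow> 'a" where
  "fedavg_avg G K b eta I x1 xi t =
     (1 / real K) *\<^sub>R (\<Sum>k<K. fedavg_local G K b eta I x1 xi (t - 1) k)"

end

theory Submission
  imports Defs
begin

text \<open>
  The average x_t of the local iterates performs SGD on f, with the gradients evaluated at the
  local iterates instead of at x_t. Smoothness of f turns this into the descent inequality
    E f(x_t+1) <= E f(x_t) - eta/2 E |grad f(x_t)|^2 + eta L^2/2 E D_t + L eta^2 sigma^2/(2bK),
  where D_t is the mean squared distance of the local iterates from their average. D_t vanishes
  at every communication round and in between grows by at most the factor
  1 + 1/(2(I-1)) + O(eta^2 L^2 I) plus O(eta^2 (I zeta^2 + sigma^2/b)); since eta L I <= 1/9 this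
  gives E D_t <= (t mod I) eta^2 (10(I-1) zeta^2 + 6 sigma^2/b). Telescoping the descent
  inequality, using that the sum of t mod I over t < T is T(I-1)/2, and inserting
  eta = sqrt(bK/T) yields the rate. Expectations over round t are computed by integrating the
  fresh minibatches against their product distribution; this is legitimate because they are
  independent of the samples that determine the current iterates.\<close>

section \<open>Inequalities in inner product spaces\<close>

lemma power2_norm_add:
  "(norm (a + b))\<^sup>2 = (norm a)\<^sup>2 + 2 * inner a b + (norm (b::'a::real_inner))\<^sup>2"
  by (simp add: power2_norm_eq_inner inner_add_left inner_add_right inner_commute)

lemma power2_norm_diff:
  "(norm (a - b))\<^sup>2 = (norm a)\<^sup>2 - 2 * inner a b + (norm (b::'a::real_inner))\<^sup>2"
  by (simp add: power2_norm_eq_inner inner_diff_left inner_diff_right inner_commute)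

lemma power2_norm_diff_le_weighted:
  fixes u v :: "'a::real_inner"
  assumes a: "\<alpha> > 0"
  shows "(norm (u - v))\<^sup>2 \<le> (1 + \<alpha>) * (norm u)\<^sup>2 + (1 + 1/\<alpha>) * (norm v)\<^sup>2"
proof -
  have "0 \<le> (norm (\<alpha> *\<^sub>R u + v))\<^sup>2" by simp
  also have "\<dots> = \<alpha>\<^sup>2 * (norm u)\<^sup>2 + 2 * \<alpha> * (u \<bullet> v) + (norm v)\<^sup>2"
    by (simp add: power2_norm_add power_mult_distrib)
  finally have "\<alpha> * (- 2 * (u \<bullet> v)) \<le> \<alpha>\<^sup>2 * (norm u)\<^sup>2 + (norm v)\<^sup>2" by simp
  moreover have "\<alpha>\<^sup>2 * (norm u)\<^sup>2 + (norm v)\<^sup>2 = \<alpha> * (\<alpha> * (norm u)\<^sup>2 + (norm v)\<^sup>2 / \<alpha>)"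
    using a by (simp add: field_simps power2_eq_square)
  ultimately have "- 2 * (u \<bullet> v) \<le> \<alpha> * (norm u)\<^sup>2 + (norm v)\<^sup>2 / \<alpha>"
    using a by (metis mult_le_cancel_left_pos)
  then show ?thesis by (simp add: power2_norm_diff algebra_simps)
qed

lemma sum_power2_norm_diff_split_mean:
  fixes v :: "nat \<Rightarrow> 'a::real_inner"
  assumes K: "K \<ge> 1"
  defines "m \<equiv> (1 / real K) *\<^sub>R (\<Sum>k<K. v k)"
  shows "(\<Sum>k<K. (norm (v k - c))\<^sup>2) = (\<Sum>k<K. (norm (v k - m))\<^sup>2) + real K * (norm (m - c))\<^sup>2"
proof -
  have centered: "(\<Sum>k<K. v k - m) = 0"
    using K by (simp add: sum_subtractf m_def sum_constant_scaleR)
  have "(\<Sum>k<K. (norm (v k - c))\<^sup>2) = (\<Sum>k<K. (norm ((v k - m) + (m - c)))\<^sup>2)" by simp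
  also have "\<dots> = (\<Sum>k<K. (norm (v k - m))\<^sup>2 + 2 * inner (v k - m) (m - c) + (norm (m - c))\<^sup>2)"
    by (simp only: power2_norm_add)
  also have "\<dots> = (\<Sum>k<K. (norm (v k - m))\<^sup>2) + 2 * inner (\<Sum>k<K. v k - m) (m - c)
      + real K * (norm (m - c))\<^sup>2"
    by (simp add: sum.distrib sum_distrib_left inner_sum_left)
  finally show ?thesis using centered by simp
qed

lemma sum_power2_norm_diff_mean_le:
  fixes v :: "nat \<Rightarrow> 'a::real_inner"
  assumes "K \<ge> 1"
  shows "(\<Sum>k<K. (norm (v k - (1 / real K) *\<^sub>R (\<Sum>k<K. v k)))\<^sup>2) \<le> (\<Sum>k<K. (norm (v k - c))\<^sup>2)"
  using sum_power2_norm_diff_split_mean[OF assms, of v c] by simp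

lemma power2_norm_mean_le:
  fixes v :: "nat \<Rightarrow> 'a::real_inner"
  assumes K: "K \<ge> 1"
  shows "(norm ((1 / real K) *\<^sub>R (\<Sum>k<K. v k)))\<^sup>2 \<le> (1 / real K) * (\<Sum>k<K. (norm (v k))\<^sup>2)"
proof -
  have "real K * (norm ((1 / real K) *\<^sub>R (\<Sum>k<K. v k)))\<^sup>2 \<le> (\<Sum>k<K. (norm (v k))\<^sup>2)"
    using sum_power2_norm_diff_split_mean[OF K, of v 0] by (simp add: sum_nonneg)
  then show ?thesis using K by (simp add: field_simps)
qed

lemma mult_le_sum_squares:
  fixes a b :: real
  assumes "0 \<le> a" "0 \<le> b"
  shows "a * b \<le> a\<^sup>2 + b\<^sup>2"
  using sum_squares_bound[of a b] mult_nonneg_nonneg[OF assms] by (simp add: mult.assoc)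

lemma lipschitz_gradient_upper_bound:
  fixes F :: "'a::real_inner \<Rightarrow> real"
  assumes dF: "\<And>x. (F has_derivative (\<lambda>h. g x \<bullet> h)) (at x)"
    and lip: "\<And>x y. norm (g x - g y) \<le> L * norm (x - y)"
  shows "F y \<le> F x + g x \<bullet> (y - x) + L / 2 * (norm (y - x))\<^sup>2"
proof -
  define d where "d = y - x"
  define \<psi> where "\<psi> s = F (x + s *\<^sub>R d) - s * (g x \<bullet> d) - L * s\<^sup>2 / 2 * (norm d)\<^sup>2" for s :: real
  have \<psi>': "DERIV \<psi> s :> (g (x + s *\<^sub>R d) \<bullet> d - g x \<bullet> d - L * s * (norm d)\<^sup>2)" for s
  proof -
    have "((\<lambda>s. x + s *\<^sub>R d) has_derivative (\<lambda>h. h *\<^sub>R d)) (at s)"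
      by (auto intro!: derivative_eq_intros)
    from has_derivative_compose[OF this dF]
    have F_line: "((\<lambda>s. F (x + s *\<^sub>R d)) has_real_derivative (g (x + s *\<^sub>R d) \<bullet> d)) (at s)"
      by (simp add: has_field_derivative_def mult.commute[of _ "g (x + s *\<^sub>R d) \<bullet> d"])
    show ?thesis unfolding \<psi>_def
      by (rule derivative_eq_intros F_line | simp)+
  qed
  have "\<psi> 1 \<le> \<psi> 0"
  proof (rule DERIV_nonpos_imp_nonincreasing[of 0 1])
    fix s :: real assume s: "0 \<le> s" "s \<le> 1"
    have "g (x + s *\<^sub>R d) \<bullet> d - g x \<bullet> d = (g (x + s *\<^sub>R d) - g x) \<bullet> d"
      by (simp add: inner_diff_left)
    also have "\<dots> \<le> norm (g (x + s *\<^sub>R d) - g x) * norm d" by (rule norm_cauchy_schwarz)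
    also have "\<dots> \<le> L * norm (s *\<^sub>R d) * norm d"
      using lip[of "x + s *\<^sub>R d" x] by (intro mult_right_mono) auto
    also have "\<dots> = L * s * (norm d)\<^sup>2" using s by (simp add: power2_eq_square)
    finally show "\<exists>y. DERIV \<psi> s :> y \<and> y \<le> 0" using \<psi>' by (intro exI conjI) auto
  qed simp
  then show ?thesis unfolding \<psi>_def d_def by (simp add: algebra_simps)
qed

lemma biased_step_inner_bound:
  fixes g h :: "'a::real_inner"
  assumes "0 \<le> \<eta>" "0 \<le> L" "\<eta> * L \<le> 1"
  shows "- \<eta> * (g \<bullet> h) + L * \<eta>\<^sup>2 / 2 * (norm h)\<^sup>2 \<le> - \<eta> / 2 * (norm g)\<^sup>2 + \<eta> / 2 * (norm (g - h))\<^sup>2"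
proof -
  have "L * \<eta>\<^sup>2 \<le> \<eta>"
    using assms mult_left_mono[of "\<eta> * L" 1 \<eta>] by (simp add: power2_eq_square mult_ac)
  then have "L * \<eta>\<^sup>2 / 2 * (norm h)\<^sup>2 \<le> \<eta> / 2 * (norm h)\<^sup>2"
    by (intro mult_right_mono divide_right_mono) auto
  moreover have "- \<eta> * (g \<bullet> h) = \<eta> / 2 * ((norm (g - h))\<^sup>2 - (norm g)\<^sup>2 - (norm h)\<^sup>2)"
    by (simp add: power2_norm_diff algebra_simps)
  ultimately show ?thesis by (simp add: algebra_simps)
qed

section \<open>Integrals and independence\<close>

lemma norm_integral_le_of_second_moment:
  fixes h :: "'m \<Rightarrow> 'a::euclidean_space"
  assumes P: "prob_space N" and hi: "integrable N h"
    and h2: "(\<integral>\<^sup>+ s. ennreal ((norm (h s))\<^sup>2) \<partial>N) \<le> ennreal (B\<^sup>2)" and B: "B \<ge> 0"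
  shows "norm (integral\<^sup>L N h) \<le> B"
proof -
  interpret prob_space N by fact
  have hm: "h \<in> borel_measurable N" using hi by auto
  \<comment> \<open>AM-GM: \<open>\<parallel>h\<parallel> \<le> \<parallel>h\<parallel>\<^sup>2/(2c) + c/2\<close>, then optimise over \<open>c\<close>\<close>
  have key: "norm (integral\<^sup>L N h) \<le> B\<^sup>2 / (2*c) + c / 2" if c: "c > 0" for c
  proof -
    have "(\<integral>\<^sup>+ s. ennreal (norm (h s)) \<partial>N) \<le> (\<integral>\<^sup>+ s. ennreal ((norm (h s))\<^sup>2 / (2*c) + c/2) \<partial>N)"
    proof (rule nn_integral_mono)
      fix s
      have "0 \<le> (norm (h s) - c)\<^sup>2" by simp
      then have "norm (h s) \<le> (norm (h s))\<^sup>2 / (2*c) + c/2"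
        using c by (simp add: field_simps power2_eq_square)
      then show "ennreal (norm (h s)) \<le> ennreal ((norm (h s))\<^sup>2 / (2*c) + c/2)"
        by (simp add: ennreal_leI)
    qed
    also have "\<dots> = (\<integral>\<^sup>+ s. ennreal ((norm (h s))\<^sup>2) * ennreal (1/(2*c)) + ennreal (c/2) \<partial>N)"
      using c by (intro nn_integral_cong)
        (simp add: ennreal_plus[symmetric] ennreal_mult[symmetric] divide_simps)
    also have "\<dots> = (\<integral>\<^sup>+ s. ennreal ((norm (h s))\<^sup>2) \<partial>N) * ennreal (1/(2*c)) + ennreal (c/2)"
      using hm by (simp add: nn_integral_add nn_integral_multc emeasure_space_1)
    also have "\<dots> \<le> ennreal (B\<^sup>2) * ennreal (1/(2*c)) + ennreal (c/2)"
      by (intro add_mono mult_right_mono h2) auto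
    also have "\<dots> = ennreal (B\<^sup>2 / (2*c) + c/2)"
      using c by (simp add: ennreal_plus[symmetric] ennreal_mult[symmetric] divide_simps)
    finally have nn: "(\<integral>\<^sup>+ s. ennreal (norm (h s)) \<partial>N) \<le> ennreal (B\<^sup>2 / (2*c) + c/2)" .
    have "norm (integral\<^sup>L N h) \<le> (\<integral>s. norm (h s) \<partial>N)" by (rule integral_norm_bound)
    also have "\<dots> = enn2real (\<integral>\<^sup>+ s. ennreal (norm (h s)) \<partial>N)"
      using hm by (intro integral_eq_nn_integral) auto
    also have "\<dots> \<le> B\<^sup>2 / (2*c) + c/2"
      using nn c by (intro enn2real_leI) (auto simp: add_pos_nonneg)
    finally show ?thesis .
  qed
  show ?thesis
  proof (cases "B > 0")
    case True
    from key[OF True] show ?thesis using True by (simp add: power2_eq_square)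
  next
    case False
    then have B0: "B = 0" using B by simp
    have "norm (integral\<^sup>L N h) \<le> e" if "e > 0" for e
      using key[of "2*e"] that B0 by simp
    then show ?thesis using B0 by (meson dense_le_bounded not_le)
  qed
qed

lemma nn_integral_le_integral_of_le:
  assumes R: "integrable N R" and nonneg: "\<And>y. 0 \<le> \<phi> y" and le: "\<And>y. \<phi> y \<le> R y"
  shows "(\<integral>\<^sup>+y. ennreal (\<phi> y) \<partial>N) \<le> ennreal (integral\<^sup>L N R)"
proof -
  have "(\<integral>\<^sup>+y. ennreal (\<phi> y) \<partial>N) \<le> (\<integral>\<^sup>+y. ennreal (R y) \<partial>N)"
    by (intro nn_integral_mono ennreal_leI le)
  also have "\<dots> = ennreal (integral\<^sup>L N R)"
    using R order_trans[OF nonneg le] by (intro nn_integral_eq_integral) auto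
  finally show ?thesis .
qed

lemma add_ennreal_le_ennreal:
  fixes a c d :: real
  assumes "x \<le> ennreal a" and "0 \<le> a" and "0 \<le> c" and "a + c \<le> d"
  shows "x + ennreal c \<le> ennreal d"
proof -
  have "x + ennreal c \<le> ennreal a + ennreal c" using assms(1) by (rule add_right_mono)
  also have "\<dots> = ennreal (a + c)" using assms(2,3) by (simp add: ennreal_plus)
  also have "\<dots> \<le> ennreal d" using assms(4) by (rule ennreal_leI)
  finally show ?thesis .
qed

lemma (in prob_space) nn_integral_ennreal_affine:
  assumes "f \<in> borel_measurable M" "\<And>x. 0 \<le> f x" "0 \<le> c" "0 \<le> d"
  shows "(\<integral>\<^sup>+x. ennreal (c * f x + d) \<partial>M) = ennreal c * (\<integral>\<^sup>+x. ennreal (f x) \<partial>M) + ennreal d"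
proof -
  have "(\<integral>\<^sup>+x. ennreal (c * f x + d) \<partial>M) = (\<integral>\<^sup>+x. ennreal c * ennreal (f x) + ennreal d \<partial>M)"
    using assms by (intro nn_integral_cong) (simp add: ennreal_plus ennreal_mult)
  also have "\<dots> = ennreal c * (\<integral>\<^sup>+x. ennreal (f x) \<partial>M) + ennreal d"
    using assms(1) by (simp add: nn_integral_add nn_integral_cmult emeasure_space_1)
  finally show ?thesis .
qed

lemma nn_integral_indep_blocks:
  fixes X :: "'i \<Rightarrow> 'm \<Rightarrow> 's"
  assumes P: "prob_space M" and ind: "prob_space.indep_vars M (\<lambda>_. S) X J"
    and AJ: "A \<subseteq> J" and BJ: "B \<subseteq> J" and AB: "A \<inter> B = {}"
    and h: "h \<in> borel_measurable (PiM A (\<lambda>_. S) \<Otimes>\<^sub>M PiM B (\<lambda>_. S))"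
  shows "(\<integral>\<^sup>+\<omega>. h (restrict (\<lambda>i. X i \<omega>) A, restrict (\<lambda>i. X i \<omega>) B) \<partial>M)
       = (\<integral>\<^sup>+\<omega>. (\<integral>\<^sup>+y. h (restrict (\<lambda>i. X i \<omega>) A, y)
            \<partial>distr M (PiM B (\<lambda>_. S)) (\<lambda>\<omega>. restrict (\<lambda>i. X i \<omega>) B)) \<partial>M)"
proof -
  interpret prob_space M by fact
  let ?PA = "PiM A (\<lambda>_. S)" and ?PB = "PiM B (\<lambda>_. S)"
  let ?pa = "\<lambda>\<omega>. restrict (\<lambda>i. X i \<omega>) A" and ?pb = "\<lambda>\<omega>. restrict (\<lambda>i. X i \<omega>) B"
  have "indep_var ?PA ?pa ?PB ?pb"
    by (rule indep_var_restrict[OF ind AB AJ BJ])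
  then have rv: "random_variable ?PA ?pa" "random_variable ?PB ?pb"
    and joint: "distr M ?PA ?pa \<Otimes>\<^sub>M distr M ?PB ?pb = distr M (?PA \<Otimes>\<^sub>M ?PB) (\<lambda>x. (?pa x, ?pb x))"
    using indep_var_distribution_eq by blast+
  interpret DB: prob_space "distr M ?PB ?pb" by (rule prob_space_distr[OF rv(2)])
  have pair: "(\<lambda>x. (?pa x, ?pb x)) \<in> measurable M (?PA \<Otimes>\<^sub>M ?PB)"
    using rv by (rule measurable_Pair)
  have h': "h \<in> borel_measurable (distr M ?PA ?pa \<Otimes>\<^sub>M distr M ?PB ?pb)"
    using h by (simp cong: measurable_cong_sets)
  have "(\<integral>\<^sup>+\<omega>. h (?pa \<omega>, ?pb \<omega>) \<partial>M) = integral\<^sup>N (distr M (?PA \<Otimes>\<^sub>M ?PB) (\<lambda>x. (?pa x, ?pb x))) h"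
    by (subst nn_integral_distr[OF pair]) (simp_all add: h)
  also have "\<dots> = integral\<^sup>N (distr M ?PA ?pa \<Otimes>\<^sub>M distr M ?PB ?pb) h" by (simp only: joint)
  also have "\<dots> = (\<integral>\<^sup>+p. \<integral>\<^sup>+y. h (p, y) \<partial>distr M ?PB ?pb \<partial>distr M ?PA ?pa)"
    by (rule DB.nn_integral_fst[OF h', symmetric])
  also have "\<dots> = (\<integral>\<^sup>+\<omega>. \<integral>\<^sup>+y. h (?pa \<omega>, y) \<partial>distr M ?PB ?pb \<partial>M)"
    by (rule nn_integral_distr[OF rv(1) DB.borel_measurable_nn_integral_fst[OF h']])
  finally show ?thesis .
qed

locale product_noise =
  fixes Mi :: "'i \<Rightarrow> 's measure" and B :: "'i set" and E :: "'i \<Rightarrow> 's \<Rightarrow> 'a::euclidean_space"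
    and s2 :: real
  assumes s2_nonneg: "s2 \<ge> 0" and prob_factor: "\<And>i. prob_space (Mi i)" and finite_B: "finite B"
    and E_measurable: "\<And>i. i \<in> B \<Longrightarrow> E i \<in> borel_measurable (Mi i)"
    and E_integrable: "\<And>i. i \<in> B \<Longrightarrow> integrable (Mi i) (E i)"
    and E_centred: "\<And>i. i \<in> B \<Longrightarrow> integral\<^sup>L (Mi i) (E i) = 0"
    and E_second_moment: "\<And>i. i \<in> B \<Longrightarrow> (\<integral>\<^sup>+s. ennreal ((norm (E i s))\<^sup>2) \<partial>Mi i) \<le> ennreal s2"
begin

abbreviation (input) joint where "joint \<equiv> PiM B Mi"

abbreviation noise :: "'i \<Rightarrow> ('i \<Rightarrow> 's) \<Rightarrow> 'a" where "noise i y \<equiv> E i (y i)"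

lemma prob_space_joint: "prob_space joint"
  by (simp add: prob_factor prob_space_PiM)

lemma measurable_joint_component: "i \<in> B \<Longrightarrow> (\<lambda>y. y i) \<in> measurable joint (Mi i)"
  by (rule measurable_component_singleton)

lemma distr_joint_component: "i \<in> B \<Longrightarrow> distr joint (Mi i) (\<lambda>y. y i) = Mi i"
  by (rule distr_PiM_component) (auto simp: prob_factor)

lemma integrable_component:
  fixes \<phi> :: "'s \<Rightarrow> 'c::{banach, second_countable_topology}"
  assumes i: "i \<in> B" and "integrable (Mi i) \<phi>"
  shows "integrable joint (\<lambda>y. \<phi> (y i))"
proof -
  have "\<phi> \<in> borel_measurable (Mi i)" using assms by auto
  from integrable_distr_eq[OF measurable_joint_component[OF i] this] show ?thesis
    using assms distr_joint_component[OF i] by simp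
qed

lemma integral_component:
  fixes \<phi> :: "'s \<Rightarrow> 'c::{banach, second_countable_topology}"
  assumes i: "i \<in> B" and m: "\<phi> \<in> borel_measurable (Mi i)"
  shows "(\<integral>y. \<phi> (y i) \<partial>joint) = integral\<^sup>L (Mi i) \<phi>"
  using integral_distr[OF measurable_joint_component[OF i] m] distr_joint_component[OF i]
  by simp

lemma integrable_power2_norm_E:
  assumes i: "i \<in> B"
  shows "integrable (Mi i) (\<lambda>s. (norm (E i s))\<^sup>2)"
proof (rule integrableI_bounded)
  show "(\<lambda>s. (norm (E i s))\<^sup>2) \<in> borel_measurable (Mi i)"
    using E_measurable[OF i] by measurable
  show "(\<integral>\<^sup>+s. ennreal (norm ((norm (E i s))\<^sup>2)) \<partial>Mi i) < \<infinity>"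
    using E_second_moment[OF i] by (simp add: le_less_trans[OF _ ennreal_less_top])
qed

lemma integral_power2_norm_E_le: "i \<in> B \<Longrightarrow> (\<integral>s. (norm (E i s))\<^sup>2 \<partial>Mi i) \<le> s2"
  using nn_integral_eq_integral[OF integrable_power2_norm_E] E_second_moment s2_nonneg
  by (fastforce simp: ennreal_le_iff)

lemma noise_measurable: "i \<in> B \<Longrightarrow> noise i \<in> borel_measurable joint"
  using measurable_comp[OF measurable_joint_component E_measurable] by (simp add: comp_def)

lemma noise_integrable: "i \<in> B \<Longrightarrow> integrable joint (noise i)"
  using integrable_component[OF _ E_integrable] by simp

lemma noise_power2_integrable: "i \<in> B \<Longrightarrow> integrable joint (\<lambda>y. (norm (noise i y))\<^sup>2)"
  using integrable_component[OF _ integrable_power2_norm_E] by simp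

lemma noise_power2_integral_le: "i \<in> B \<Longrightarrow> (\<integral>y. (norm (noise i y))\<^sup>2 \<partial>joint) \<le> s2"
  using integral_component[of i "\<lambda>s. (norm (E i s))\<^sup>2"] E_measurable integral_power2_norm_E_le
  by fastforce

lemma integrable_dominated_by_noise:
  assumes i: "i \<in> B" and i': "i' \<in> B" and m: "\<phi> \<in> borel_measurable joint"
    and bound: "\<And>y. \<bar>\<phi> y\<bar> \<le> norm (noise i y) * norm (noise i' y)"
  shows "integrable joint \<phi>"
proof (rule Bochner_Integration.integrable_bound[OF _ m])
  show "integrable joint (\<lambda>y. (norm (noise i y))\<^sup>2 + (norm (noise i' y))\<^sup>2)"
    using noise_power2_integrable[OF i] noise_power2_integrable[OF i'] by simp
  show "AE y in joint. norm (\<phi> y) \<le> norm ((norm (noise i y))\<^sup>2 + (norm (noise i' y))\<^sup>2)"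
  proof (rule AE_I2)
    fix y
    have "\<bar>\<phi> y\<bar> \<le> (norm (noise i y))\<^sup>2 + (norm (noise i' y))\<^sup>2"
      using bound[of y] mult_le_sum_squares[of "norm (noise i y)" "norm (noise i' y)"] by simp
    then show "norm (\<phi> y) \<le> norm ((norm (noise i y))\<^sup>2 + (norm (noise i' y))\<^sup>2)" by simp
  qed
qed

lemma noise_inner_integrable:
  assumes i: "i \<in> B" and i': "i' \<in> B"
  shows "integrable joint (\<lambda>y. noise i y \<bullet> noise i' y)"
proof (rule integrable_dominated_by_noise[OF i i'])
  show "(\<lambda>y. noise i y \<bullet> noise i' y) \<in> borel_measurable joint"
    using noise_measurable[OF i] noise_measurable[OF i'] by measurable
qed (rule Cauchy_Schwarz_ineq2)

text \<open>Independence enters only here, through Fubini for products of coordinate functions.\<close>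

lemma noise_coordinate_product_integral_zero:
  assumes i: "i \<in> B" and i': "i' \<in> B" and ne: "i \<noteq> i'"
  shows "(\<integral>y. (noise i y \<bullet> u) * (noise i' y \<bullet> u) \<partial>joint) = 0"
proof -
  define f where "f l = (if l = i then (\<lambda>s. E i s \<bullet> u) else if l = i' then (\<lambda>s. E i' s \<bullet> u)
    else (\<lambda>s. 1::real))" for l
  have f_integrable: "integrable (Mi l) (f l)" if "l \<in> B" for l
    using that E_integrable[OF i] E_integrable[OF i'] prob_factor[of l]
    by (auto simp: f_def prob_space_def finite_measure.integrable_const)
  have "(\<Prod>l\<in>B. f l (y l)) = f i (y i) * f i' (y i') * (\<Prod>l\<in>B - {i} - {i'}. f l (y l))" for y
  proof -
    have "(\<Prod>l\<in>B. f l (y l)) = f i (y i) * (\<Prod>l\<in>B - {i}. f l (y l))"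
      using finite_B i by (simp add: prod.remove)
    also have "(\<Prod>l\<in>B - {i}. f l (y l)) = f i' (y i') * (\<Prod>l\<in>B - {i} - {i'}. f l (y l))"
      using finite_B i' ne by (intro prod.remove) auto
    finally show ?thesis by (simp add: mult.assoc)
  qed
  then have prod_eq: "(\<Prod>l\<in>B. f l (y l)) = (noise i y \<bullet> u) * (noise i' y \<bullet> u)" for y
    using ne by (simp add: f_def)
  have "(\<integral>y. (noise i y \<bullet> u) * (noise i' y \<bullet> u) \<partial>joint) = (\<Prod>l\<in>B. integral\<^sup>L (Mi l) (f l))"
    unfolding prod_eq[symmetric]
    by (rule product_sigma_finite.product_integral_prod[OF _ finite_B f_integrable])
      (simp add: prob_factor product_sigma_finite_def prob_space_imp_sigma_finite)
  also have "\<dots> = integral\<^sup>L (Mi i) (f i) * (\<Prod>l\<in>B - {i}. integral\<^sup>L (Mi l) (f l))"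
    using finite_B i by (simp add: prod.remove)
  also have "integral\<^sup>L (Mi i) (f i) = 0"
    using E_centred[OF i] E_integrable[OF i] by (simp add: f_def)
  finally show ?thesis by simp
qed

lemma noise_inner_integral_zero:
  assumes i: "i \<in> B" and i': "i' \<in> B" and ne: "i \<noteq> i'"
  shows "(\<integral>y. noise i y \<bullet> noise i' y \<partial>joint) = 0"
proof -
  have coordinate_integrable: "integrable joint (\<lambda>y. (noise i y \<bullet> u) * (noise i' y \<bullet> u))"
    if u: "u \<in> Basis" for u
  proof (rule integrable_dominated_by_noise[OF i i'])
    show "(\<lambda>y. (noise i y \<bullet> u) * (noise i' y \<bullet> u)) \<in> borel_measurable joint"
      using noise_measurable[OF i] noise_measurable[OF i'] by measurable
    show "\<bar>(noise i y \<bullet> u) * (noise i' y \<bullet> u)\<bar> \<le> norm (noise i y) * norm (noise i' y)" for y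
      using Basis_le_norm[OF u] by (simp add: abs_mult mult_mono')
  qed
  have "(\<integral>y. noise i y \<bullet> noise i' y \<partial>joint)
      = (\<integral>y. (\<Sum>u\<in>Basis. (noise i y \<bullet> u) * (noise i' y \<bullet> u)) \<partial>joint)"
    by (intro Bochner_Integration.integral_cong refl euclidean_inner)
  also have "\<dots> = (\<Sum>u\<in>Basis. (\<integral>y. (noise i y \<bullet> u) * (noise i' y \<bullet> u) \<partial>joint))"
    using coordinate_integrable by (rule Bochner_Integration.integral_sum)
  also have "\<dots> = 0"
    using noise_coordinate_product_integral_zero[OF i i' ne] by simp
  finally show ?thesis .
qed

lemma power2_norm_sum_noise:
  "(norm (\<Sum>i\<in>J. noise i y))\<^sup>2 = (\<Sum>i\<in>J. \<Sum>i'\<in>J. noise i y \<bullet> noise i' y)"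
  by (simp add: power2_norm_eq_inner inner_sum_left inner_sum_right) (rule sum.swap)

lemma noise_sum_power2_integrable:
  "J \<subseteq> B \<Longrightarrow> integrable joint (\<lambda>y. (norm (\<Sum>i\<in>J. noise i y))\<^sup>2)"
  unfolding power2_norm_sum_noise
  by (intro Bochner_Integration.integrable_sum noise_inner_integrable) auto

lemma noise_sum_power2_integral_le:
  assumes J: "J \<subseteq> B"
  shows "(\<integral>y. (norm (\<Sum>i\<in>J. noise i y))\<^sup>2 \<partial>joint) \<le> real (card J) * s2"
proof -
  have finite_J: "finite J" using J finite_B finite_subset by blast
  have inner_integrable: "i \<in> J \<Longrightarrow> i' \<in> J \<Longrightarrow> integrable joint (\<lambda>y. noise i y \<bullet> noise i' y)"
    for i i' using J by (intro noise_inner_integrable) auto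
  have diagonal: "(\<Sum>i'\<in>J. (\<integral>y. noise i y \<bullet> noise i' y \<partial>joint)) = (\<integral>y. (norm (noise i y))\<^sup>2 \<partial>joint)"
    if i: "i \<in> J" for i
  proof -
    have "(\<Sum>i'\<in>J - {i}. (\<integral>y. noise i y \<bullet> noise i' y \<partial>joint)) = 0"
      using J i by (intro sum.neutral) (auto intro!: noise_inner_integral_zero)
    then show ?thesis
      using finite_J i by (simp add: sum.remove power2_norm_eq_inner)
  qed
  have "(\<integral>y. (norm (\<Sum>i\<in>J. noise i y))\<^sup>2 \<partial>joint)
      = (\<Sum>i\<in>J. \<Sum>i'\<in>J. (\<integral>y. noise i y \<bullet> noise i' y \<partial>joint))"
    unfolding power2_norm_sum_noise using inner_integrable
    by (simp add: Bochner_Integration.integral_sum Bochner_Integration.integrable_sum)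
  also have "\<dots> = (\<Sum>i\<in>J. (\<integral>y. (norm (noise i y))\<^sup>2 \<partial>joint))"
    using diagonal by simp
  also have "\<dots> \<le> (\<Sum>i\<in>J. s2)"
    using J by (intro sum_mono noise_power2_integral_le) auto
  finally show ?thesis by simp
qed

lemma noise_sum_linear_integral_zero:
  assumes J: "J \<subseteq> B"
  shows "(\<integral>y. w \<bullet> (\<Sum>i\<in>J. noise i y) \<partial>joint) = 0"
proof -
  have "(\<integral>y. w \<bullet> (\<Sum>i\<in>J. noise i y) \<partial>joint) = w \<bullet> (\<Sum>i\<in>J. integral\<^sup>L joint (noise i))"
    using J noise_integrable
    by (simp add: subset_iff Bochner_Integration.integrable_sum Bochner_Integration.integral_sum)
  also have "\<dots> = 0"
    using J integral_component[OF _ E_measurable] E_centred by (simp add: subset_iff)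
  finally show ?thesis .
qed

lemma quadratic_in_noise_integral:
  fixes C0 a :: real and w :: 'a
  assumes J: "J \<subseteq> B" and c2: "c2 \<ge> 0"
  defines "Q y \<equiv> C0 + w \<bullet> (a *\<^sub>R (\<Sum>i\<in>J. noise i y)) + c2 * (norm (a *\<^sub>R (\<Sum>i\<in>J. noise i y)))\<^sup>2"
  shows "integrable joint Q" and "integral\<^sup>L joint Q \<le> C0 + c2 * a\<^sup>2 * real (card J) * s2"
proof -
  interpret prob_space joint by (rule prob_space_joint)
  have Q_eq: "Q = (\<lambda>y. C0 + a * (w \<bullet> (\<Sum>i\<in>J. noise i y)) + (c2 * a\<^sup>2) * (norm (\<Sum>i\<in>J. noise i y))\<^sup>2)"
    by (simp add: Q_def power_mult_distrib fun_eq_iff)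
  have linear: "integrable joint (\<lambda>y. w \<bullet> (\<Sum>i\<in>J. noise i y))"
    using J by (intro integrable_inner_right Bochner_Integration.integrable_sum noise_integrable) auto
  note square = noise_sum_power2_integrable[OF J]
  show "integrable joint Q" unfolding Q_eq using linear square by simp
  have "integral\<^sup>L joint Q = C0 + (c2 * a\<^sup>2) * (\<integral>y. (norm (\<Sum>i\<in>J. noise i y))\<^sup>2 \<partial>joint)"
    unfolding Q_eq using linear square noise_sum_linear_integral_zero[OF J] by (simp add: prob_space)
  also have "\<dots> \<le> C0 + (c2 * a\<^sup>2) * (real (card J) * s2)"
    using c2 noise_sum_power2_integral_le[OF J] by (intro add_left_mono mult_left_mono) auto
  finally show "integral\<^sup>L joint Q \<le> C0 + c2 * a\<^sup>2 * real (card J) * s2" by (simp add: mult.assoc)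
qed

end

section \<open>Arithmetic of the rate\<close>

lemma sum_mod_period:
  assumes "I \<ge> 1"
  shows "(\<Sum>t<m * I. real (t mod I)) = real m * (real I * (real I - 1) / 2)"
proof (induction m)
  case (Suc m)
  have split: "(\<Sum>t<a + n. g t) = (\<Sum>t<a. g t) + (\<Sum>s<n. g (a + s))" for a n and g :: "nat \<Rightarrow> real"
    by (induction n) (simp_all add: add.assoc)
  have gauss: "(\<Sum>s<n. real s) = real n * (real n - 1) / 2" for n
    by (induction n) (simp_all add: field_simps)
  have "(\<Sum>t<Suc m * I. real (t mod I)) = (\<Sum>t<m * I. real (t mod I)) + (\<Sum>s<I. real s)"
    using split[where a = "m * I" and n = I and g = "\<lambda>t. real (t mod I)"] by (simp add: add.commute)
  then show ?case using Suc.IH gauss[of I] by (simp add: distrib_right)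
qed simp

lemma consensus_contraction_arith:
  fixes u m E :: real
  assumes u: "u \<ge> 2" and m: "0 \<le> m" "m \<le> u - 2" and E: "0 \<le> E" "E * u\<^sup>2 \<le> 1/81"
  shows "(1 / (2 * (u - 1)) + 2 * (2 * u - 1) * E) * m \<le> (u - 2) / (2 * (u - 1)) + 4 / 81"
proof -
  have "m / (2 * (u - 1)) \<le> (u - 2) / (2 * (u - 1))"
    using u m by (intro divide_right_mono) auto
  moreover have "2 * (2 * u - 1) * E * m \<le> 4 / 81"
  proof -
    have "2 * (2 * u - 1) * E * m \<le> 2 * (2 * u - 1) * E * (u - 2)"
      using u m E by (intro mult_left_mono) auto
    also have "\<dots> = E * (4 * u\<^sup>2 - 2 * (5 * u - 2))"
      by (simp add: power2_eq_square algebra_simps)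
    also have "\<dots> \<le> E * (4 * u\<^sup>2)"
      using u E by (intro mult_left_mono) auto
    finally show ?thesis using E(2) by simp
  qed
  ultimately show ?thesis by (simp add: algebra_simps)
qed

text \<open>One step of the consensus recursion, with the Young parameter \<open>\<alpha> = 1/(2(u-1))\<close> chosen so
  that \<open>(1 + \<alpha>)\<^sup>u\<close> stays bounded; here \<open>u = I\<close>, \<open>m = t mod I\<close>, \<open>E = \<eta>\<^sup>2L\<^sup>2\<close>,
  \<open>P = \<eta>\<^sup>2\<zeta>\<^sup>2\<close> and \<open>Q = \<eta>\<^sup>2\<sigma>\<^sup>2/b\<close>.\<close>

lemma consensus_recursion_arith:
  fixes u m E P Q :: real
  assumes u: "u \<ge> 2" and m: "0 \<le> m" "m \<le> u - 2" and E: "0 \<le> E" "E * u\<^sup>2 \<le> 1/81"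
    and P: "0 \<le> P" and Q: "0 \<le> Q" and \<alpha>: "\<alpha> = 1 / (2 * (u - 1))"
  shows "(1 + \<alpha> + 2 * (1 + 1 / \<alpha>) * E) * (m * (10 * (u - 1) * P + 6 * Q))
          + (2 * (1 + 1 / \<alpha>) * P + Q) \<le> (m + 1) * (10 * (u - 1) * P + 6 * Q)"
proof -
  define \<beta> where "\<beta> = 10 * (u - 1) * P + 6 * Q"
  define \<rho> where "\<rho> = (u - 2) / (2 * (u - 1)) + 4 / 81"
  have \<beta>: "\<beta> \<ge> 0" using u P Q by (simp add: \<beta>_def)
  have inv: "1 + 1 / \<alpha> = 2 * u - 1" using u by (simp add: \<alpha>)
  have contraction: "(\<alpha> + 2 * (2 * u - 1) * E) * m * \<beta> \<le> \<rho> * \<beta>"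
    using consensus_contraction_arith[OF u m E] \<beta> unfolding \<alpha> \<rho>_def by (rule mult_right_mono)
  have "\<rho> * (10 * (u - 1)) = 5 * (u - 2) + 40 * (u - 1) / 81"
    using u by (simp add: \<rho>_def field_simps)
  then have P_coeff: "\<rho> * (10 * (u - 1)) + 2 * (2 * u - 1) \<le> 10 * (u - 1)"
    using u by simp
  have "(u - 2) / (2 * (u - 1)) \<le> 1 / 2" using u by (simp add: field_simps)
  moreover have "\<rho> * 6 + 1 = 6 * ((u - 2) / (2 * (u - 1))) + 24 / 81 + 1"
    by (simp add: \<rho>_def algebra_simps)
  ultimately have Q_coeff: "\<rho> * 6 + 1 \<le> 6" by linarith
  have "(1 + \<alpha> + 2 * (2 * u - 1) * E) * (m * \<beta>) + (2 * (2 * u - 1) * P + Q)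
      = m * \<beta> + ((\<alpha> + 2 * (2 * u - 1) * E) * m * \<beta> + (2 * (2 * u - 1) * P + Q))"
    by (simp add: algebra_simps)
  also have "\<dots> \<le> m * \<beta> + (\<rho> * \<beta> + (2 * (2 * u - 1) * P + Q))"
    using contraction by simp
  also have "\<rho> * \<beta> + (2 * (2 * u - 1) * P + Q)
      = (\<rho> * (10 * (u - 1)) + 2 * (2 * u - 1)) * P + (\<rho> * 6 + 1) * Q"
    by (simp add: \<beta>_def algebra_simps)
  also have "\<dots> \<le> 10 * (u - 1) * P + 6 * Q"
    using P_coeff Q_coeff P Q by (intro add_mono mult_right_mono) auto
  finally show ?thesis unfolding inv by (simp add: \<beta>_def algebra_simps)
qed

lemma fedavg_rate_identity:
  fixes b K T I L \<sigma> \<zeta> F0 :: real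
  assumes b: "b > 0" and K: "K > 0" and T: "T > 0"
  defines "\<eta> \<equiv> sqrt (b * K / T)"
  shows "1 / T * (2 / \<eta> * (F0 + \<eta> * L\<^sup>2 / 2 * (T * (I - 1) / 2
            * (10 * (I - 1) * (\<eta>\<^sup>2 * \<zeta>\<^sup>2) + 6 * (\<eta>\<^sup>2 * \<sigma>\<^sup>2 / b)))
            + T * (L * \<eta>\<^sup>2 * \<sigma>\<^sup>2 / (2 * b * K))))
       = 2 * F0 / (sqrt (b * K) * sqrt T) + L * \<sigma>\<^sup>2 / (sqrt (b * K) * sqrt T)
         + 3 * L\<^sup>2 * K * (I - 1) / T * \<sigma>\<^sup>2 + 5 * L\<^sup>2 * b * K * (I - 1)\<^sup>2 / T * \<zeta>\<^sup>2"
proof -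
  define s r where "s = sqrt (b * K)" and "r = sqrt T"
  have s: "s > 0" "s * s = b * K" using b K by (simp_all add: s_def)
  have r: "r > 0" "r * r = T" using T by (simp_all add: r_def)
  have \<eta>: "\<eta> = s / r" by (simp add: \<eta>_def s_def r_def real_sqrt_divide)
  have \<eta>2: "\<eta>\<^sup>2 = b * K / T" using T b K by (simp add: \<eta>_def)
  have "1 / T * (2 / \<eta> * F0) = 2 * F0 / (s * r)"
    unfolding \<eta> r(2)[symmetric] using r(1) s(1) by (simp add: field_simps)
  moreover have "1 / T * (2 / \<eta> * (T * (L * \<eta>\<^sup>2 * \<sigma>\<^sup>2 / (2 * b * K)))) = L * \<sigma>\<^sup>2 / (s * r)"
  proof -
    have "s * (s * x) = b * K * x" for x using s(2) by (simp add: mult.assoc[symmetric])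
    then show ?thesis
      unfolding \<eta>2 unfolding \<eta> r(2)[symmetric] using r(1) s(1) b K by (simp add: field_simps)
  qed
  moreover have "1 / T * (2 / \<eta> * (\<eta> * L\<^sup>2 / 2 * (T * (I - 1) / 2
        * (10 * (I - 1) * (\<eta>\<^sup>2 * \<zeta>\<^sup>2) + 6 * (\<eta>\<^sup>2 * \<sigma>\<^sup>2 / b)))))
      = 5 * L\<^sup>2 * b * K * (I - 1)\<^sup>2 / T * \<zeta>\<^sup>2 + 3 * L\<^sup>2 * K * (I - 1) / T * \<sigma>\<^sup>2"
  proof -
    have "\<eta> > 0" using r(1) s(1) by (simp add: \<eta>)
    then have "1 / T * (2 / \<eta> * (\<eta> * L\<^sup>2 / 2 * (T * (I - 1) / 2
        * (10 * (I - 1) * (\<eta>\<^sup>2 * \<zeta>\<^sup>2) + 6 * (\<eta>\<^sup>2 * \<sigma>\<^sup>2 / b)))))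
      = L\<^sup>2 * (I - 1) / 2 * (10 * (I - 1) * (\<eta>\<^sup>2 * \<zeta>\<^sup>2) + 6 * (\<eta>\<^sup>2 * \<sigma>\<^sup>2 / b))"
      using T by (simp add: field_simps)
    also have "\<dots> = 5 * L\<^sup>2 * b * K * (I - 1)\<^sup>2 / T * \<zeta>\<^sup>2 + 3 * L\<^sup>2 * K * (I - 1) / T * \<sigma>\<^sup>2"
      unfolding \<eta>2 using T b by (simp add: field_simps power2_eq_square)
    finally show ?thesis .
  qed
  ultimately show ?thesis by (simp add: distrib_left s_def r_def)
qed

lemma fedavg_rate_bound:
  fixes b K T I L \<sigma> \<zeta> F0 :: real
  assumes b: "b \<ge> 1" and K: "K \<ge> 1" and T: "T > 0" and I: "I \<ge> 1" and L: "L \<ge> 0"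
  defines "\<eta> \<equiv> sqrt (b * K / T)"
  shows "1 / T * (2 / \<eta> * (F0 + \<eta> * L\<^sup>2 / 2 * (T * (I - 1) / 2
            * (10 * (I - 1) * (\<eta>\<^sup>2 * \<zeta>\<^sup>2) + 6 * (\<eta>\<^sup>2 * \<sigma>\<^sup>2 / b)))
            + T * (L * \<eta>\<^sup>2 * \<sigma>\<^sup>2 / (2 * b * K))))
       \<le> 2 * F0 / (sqrt (b * K) * sqrt T) + 2 * L * \<sigma>\<^sup>2 / (sqrt (b * K) * sqrt T)
         + 3 * L\<^sup>2 * b * K * (I - 1) / T * \<sigma>\<^sup>2 + 5 * L\<^sup>2 * b * K * (I - 1)\<^sup>2 / T * \<zeta>\<^sup>2"
proof -
  have "b > 0" "K > 0" using b K by auto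
  note identity = fedavg_rate_identity[OF this T, of F0 L I \<zeta> \<sigma>]
  show ?thesis
    unfolding \<eta>_def identity using b K I L T
    by (intro add_mono order_refl divide_right_mono mult_right_mono)
      (auto simp: mult_le_cancel_right1 mult_le_cancel_left1)
qed

lemma stepsize_condition:
  fixes b K T I L :: real
  assumes T: "T > 0" and bK: "b * K \<ge> 0" and L: "L \<ge> 0" and I: "I \<ge> 0"
    and T_large: "T \<ge> 81 * L\<^sup>2 * I\<^sup>2 * b * K"
  shows "sqrt (b * K / T) * L * I \<le> 1/9"
proof (rule power2_le_imp_le)
  have "(sqrt (b * K / T) * L * I)\<^sup>2 = (81 * L\<^sup>2 * I\<^sup>2 * b * K) / T / 81"
    using T bK by (simp add: power_mult_distrib field_simps)
  also have "\<dots> \<le> T / T / 81"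
    using T_large T by (intro divide_right_mono) auto
  finally show "(sqrt (b * K / T) * L * I)\<^sup>2 \<le> (1/9)\<^sup>2" using T by (simp add: power2_eq_square)
qed simp

section \<open>One round of FedAvg\<close>

locale fedavg =
  fixes S :: "'b measure" and D :: "nat \<Rightarrow> 'b measure"
    and G :: "nat \<Rightarrow> 'a::euclidean_space \<Rightarrow> 'b \<Rightarrow> 'a"
    and gf :: "nat \<Rightarrow> 'a \<Rightarrow> 'a" and f :: "nat \<Rightarrow> 'a \<Rightarrow> real"
    and K b I :: nat and L \<sigma> \<zeta> \<eta> :: real
  assumes K: "K \<ge> 1" and b: "b \<ge> 1" and I: "I \<ge> 1" and L: "L \<ge> 0" and eta_nonneg: "\<eta> \<ge> 0"
    and stepsize: "\<eta> * L * real I \<le> 1/9"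
    and D_prob: "\<And>k. k < K \<Longrightarrow> prob_space (D k)"
    and D_sets: "\<And>k. k < K \<Longrightarrow> sets (D k) = sets S"
    and G_meas: "\<And>k. k < K \<Longrightarrow> (\<lambda>p. G k (fst p) (snd p)) \<in> borel_measurable (borel \<Otimes>\<^sub>M S)"
    and f_grad: "\<And>k x. k < K \<Longrightarrow> (f k has_derivative (\<lambda>h. gf k x \<bullet> h)) (at x)"
    and A1: "\<And>k x y. k < K \<Longrightarrow>
       (\<integral>\<^sup>+ s. ennreal ((norm (G k x s - G k y s))\<^sup>2) \<partial>D k) \<le> ennreal (L\<^sup>2 * (norm (x - y))\<^sup>2)"
    and A2_int: "\<And>k x. k < K \<Longrightarrow> integrable (D k) (G k x)"
    and A2_unb: "\<And>k x. k < K \<Longrightarrow> (\<integral>s. G k x s \<partial>D k) = gf k x"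
    and A2_var: "\<And>k x. k < K \<Longrightarrow>
       (\<integral>\<^sup>+ s. ennreal ((norm (G k x s - gf k x))\<^sup>2) \<partial>D k) \<le> ennreal (\<sigma>\<^sup>2)"
    and A2_het: "\<And>k l x. k < K \<Longrightarrow> l < K \<Longrightarrow> (norm (gf k x - gf l x))\<^sup>2 \<le> \<zeta>\<^sup>2"
begin

text \<open>A state \<open>x :: nat \<Rightarrow> 'a\<close> holds the local iterates of the nodes \<open>k < K\<close>; the samples of
  round \<open>t\<close> are indexed by the triples \<open>(t, k, j)\<close> with \<open>j < b\<close>.\<close>

definition avg :: "(nat \<Rightarrow> 'a) \<Rightarrow> 'a" where
  "avg x = (1 / real K) *\<^sub>R (\<Sum>k<K. x k)"

definition fbar :: "'a \<Rightarrow> real" where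
  "fbar z = (1 / real K) * (\<Sum>k<K. f k z)"

definition gbar :: "'a \<Rightarrow> 'a" where
  "gbar z = (1 / real K) *\<^sub>R (\<Sum>k<K. gf k z)"

definition consensus_error :: "(nat \<Rightarrow> 'a) \<Rightarrow> real" where
  "consensus_error x = (1 / real K) * (\<Sum>k<K. (norm (x k - avg x))\<^sup>2)"

definition local_step :: "(nat \<Rightarrow> 'a) \<Rightarrow> (nat \<Rightarrow> nat \<Rightarrow> 'b) \<Rightarrow> nat \<Rightarrow> 'a" where
  "local_step x y k = x k - \<eta> *\<^sub>R ((1 / real b) *\<^sub>R (\<Sum>j<b. G k (x k) (y k j)))"

definition fedavg_step :: "nat \<Rightarrow> (nat \<Rightarrow> 'a) \<Rightarrow> (nat \<Rightarrow> nat \<Rightarrow> 'b) \<Rightarrow> nat \<Rightarrow> 'a" where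
  "fedavg_step t x y = (if t mod I = 0 then (\<lambda>k. avg (local_step x y)) else local_step x y)"

definition round_samples :: "nat \<Rightarrow> (nat \<times> nat \<times> nat) set" where
  "round_samples t = {t} \<times> {..<K} \<times> {..<b}"

definition node_samples :: "nat \<Rightarrow> nat \<Rightarrow> (nat \<times> nat \<times> nat) set" where
  "node_samples t k = {t} \<times> {k} \<times> {..<b}"

text \<open>The value of \<open>sample_distr\<close> at indices of nonexistent nodes is irrelevant; it is chosen to
  be a probability measure.\<close>

definition sample_distr :: "nat \<times> nat \<times> nat \<Rightarrow> 'b measure" where
  "sample_distr i = (if fst (snd i) < K then D (fst (snd i)) else D 0)"

definition grad_noise :: "(nat \<Rightarrow> 'a) \<Rightarrow> nat \<times> nat \<times> nat \<Rightarrow> 'b \<Rightarrow> 'a" where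
  "grad_noise x i s = G (fst (snd i)) (x (fst (snd i))) s - gf (fst (snd i)) (x (fst (snd i)))"

lemma K_pos: "real K > 0"
  using K by simp

lemma prob_space_sample_distr: "prob_space (sample_distr i)"
  using D_prob K by (auto simp: sample_distr_def)

lemma G_measurable: "k < K \<Longrightarrow> G k c \<in> borel_measurable (D k)"
proof -
  assume k: "k < K"
  have "(\<lambda>s. (c, s)) \<in> measurable S (borel \<Otimes>\<^sub>M S)" by measurable
  from measurable_comp[OF this G_meas[OF k]] have "G k c \<in> borel_measurable S"
    by (simp add: comp_def)
  then show ?thesis by (simp cong: measurable_cong_sets add: D_sets[OF k])
qed

lemma gf_lipschitz: "k < K \<Longrightarrow> norm (gf k x - gf k y) \<le> L * norm (x - y)"
proof -
  assume k: "k < K"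
  have "gf k x - gf k y = (\<integral>s. G k x s - G k y s \<partial>D k)"
    using A2_int[OF k] A2_unb[OF k] by simp
  also have "norm \<dots> \<le> L * norm (x - y)"
    using A2_int[OF k] A1[OF k] L
    by (intro norm_integral_le_of_second_moment[OF D_prob[OF k]]) (auto simp: power_mult_distrib)
  finally show ?thesis .
qed

lemma gbar_lipschitz: "norm (gbar x - gbar y) \<le> L * norm (x - y)"
proof -
  have "norm (gbar x - gbar y) = (1 / real K) * norm (\<Sum>k<K. gf k x - gf k y)"
    by (simp add: gbar_def sum_subtractf flip: scaleR_diff_right)
  also have "\<dots> \<le> (1 / real K) * (\<Sum>k<K. L * norm (x - y))"
    using K_pos gf_lipschitz
    by (intro mult_left_mono order_trans[OF norm_sum sum_mono]) auto
  also have "\<dots> = L * norm (x - y)" using K_pos by simp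
  finally show ?thesis .
qed

lemma has_derivative_fbar: "(fbar has_derivative (\<lambda>h. gbar z \<bullet> h)) (at z)"
proof -
  have "((\<lambda>x. (1 / real K) * (\<Sum>k<K. f k x))
      has_derivative (\<lambda>h. (1 / real K) * (\<Sum>k<K. gf k z \<bullet> h))) (at z)"
    using f_grad by (intro has_derivative_mult_right has_derivative_sum) auto
  then show ?thesis by (simp add: fbar_def[abs_def] gbar_def inner_sum_left)
qed

lemma gbar_avg_minus_avg_grad_le:
  "(norm (gbar (avg x) - avg (\<lambda>k. gf k (x k))))\<^sup>2 \<le> L\<^sup>2 * consensus_error x"
proof -
  have "gbar (avg x) - avg (\<lambda>k. gf k (x k)) = (1 / real K) *\<^sub>R (\<Sum>k<K. gf k (avg x) - gf k (x k))"
    by (simp add: gbar_def avg_def sum_subtractf scaleR_diff_right)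
  then have "(norm (gbar (avg x) - avg (\<lambda>k. gf k (x k))))\<^sup>2
      \<le> (1 / real K) * (\<Sum>k<K. (norm (gf k (avg x) - gf k (x k)))\<^sup>2)"
    using power2_norm_mean_le[OF K, of "\<lambda>k. gf k (avg x) - gf k (x k)"] by simp
  also have "\<dots> \<le> (1 / real K) * (\<Sum>k<K. L\<^sup>2 * (norm (x k - avg x))\<^sup>2)"
  proof (intro mult_left_mono sum_mono)
    fix k assume "k \<in> {..<K}"
    then have "norm (gf k (avg x) - gf k (x k)) \<le> L * norm (x k - avg x)"
      using gf_lipschitz[of k] by (simp add: norm_minus_commute)
    from power_mono[OF this norm_ge_zero]
    show "(norm (gf k (avg x) - gf k (x k)))\<^sup>2 \<le> L\<^sup>2 * (norm (x k - avg x))\<^sup>2"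
      by (simp add: power_mult_distrib)
  qed (use K_pos in auto)
  also have "\<dots> = L\<^sup>2 * consensus_error x"
    by (simp add: consensus_error_def sum_distrib_left)
  finally show ?thesis .
qed

lemma power2_norm_gf_minus_gbar_le: "k < K \<Longrightarrow> (norm (gf k z - gbar z))\<^sup>2 \<le> \<zeta>\<^sup>2"
proof -
  assume k: "k < K"
  have "gf k z - gbar z = (1 / real K) *\<^sub>R (\<Sum>l<K. gf k z - gf l z)"
    using K_pos by (simp add: gbar_def sum_subtractf sum_constant_scaleR scaleR_diff_right)
  then have "(norm (gf k z - gbar z))\<^sup>2 \<le> (1 / real K) * (\<Sum>l<K. (norm (gf k z - gf l z))\<^sup>2)"
    using power2_norm_mean_le[OF K, of "\<lambda>l. gf k z - gf l z"] by simp
  also have "\<dots> \<le> (1 / real K) * (\<Sum>l<K. \<zeta>\<^sup>2)"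
    using k by (intro mult_left_mono sum_mono A2_het) auto
  also have "\<dots> = \<zeta>\<^sup>2" using K_pos by simp
  finally show ?thesis .
qed

lemma gradient_dispersion_le:
  "(1 / real K) * (\<Sum>k<K. (norm (gf k (x k) - avg (\<lambda>k. gf k (x k))))\<^sup>2)
     \<le> 2 * L\<^sup>2 * consensus_error x + 2 * \<zeta>\<^sup>2"
proof -
  define m where "m = gbar (avg x)"
  have "(\<Sum>k<K. (norm (gf k (x k) - avg (\<lambda>k. gf k (x k))))\<^sup>2) \<le> (\<Sum>k<K. (norm (gf k (x k) - m))\<^sup>2)"
    unfolding avg_def by (rule sum_power2_norm_diff_mean_le[OF K])
  also have "\<dots> \<le> (\<Sum>k<K. 2 * (L\<^sup>2 * (norm (x k - avg x))\<^sup>2) + 2 * \<zeta>\<^sup>2)"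
  proof (rule sum_mono)
    fix k assume "k \<in> {..<K}"
    then have k: "k < K" by simp
    have "(norm (gf k (x k) - m))\<^sup>2
        \<le> 2 * (norm (gf k (x k) - gf k (avg x)))\<^sup>2 + 2 * (norm (m - gf k (avg x)))\<^sup>2"
      using power2_norm_diff_le_weighted[of 1 "gf k (x k) - gf k (avg x)" "m - gf k (avg x)"]
      by simp
    also have "(norm (gf k (x k) - gf k (avg x)))\<^sup>2 \<le> L\<^sup>2 * (norm (x k - avg x))\<^sup>2"
      using power_mono[OF gf_lipschitz[OF k, of "x k" "avg x"] norm_ge_zero]
      by (simp add: power_mult_distrib)
    also have "(norm (m - gf k (avg x)))\<^sup>2 \<le> \<zeta>\<^sup>2"
      using power2_norm_gf_minus_gbar_le[OF k] by (simp add: m_def norm_minus_commute)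
    finally show "(norm (gf k (x k) - m))\<^sup>2 \<le> 2 * (L\<^sup>2 * (norm (x k - avg x))\<^sup>2) + 2 * \<zeta>\<^sup>2"
      by simp
  qed
  also have "\<dots> = real K * (2 * L\<^sup>2 * consensus_error x + 2 * \<zeta>\<^sup>2)"
    using K_pos by (simp add: consensus_error_def sum.distrib sum_distrib_left field_simps)
  finally show ?thesis using K_pos by (simp add: field_simps)
qed

lemma eta_L_le_1: "\<eta> * L \<le> 1"
  using stepsize mult_left_mono[of 1 "real I" "\<eta> * L"] I eta_nonneg L by simp

lemma product_noise_round:
  "product_noise sample_distr (round_samples t) (grad_noise x) (\<sigma>\<^sup>2)"
proof (rule product_noise.intro)
  show "0 \<le> \<sigma>\<^sup>2" by simp
  show "prob_space (sample_distr i)" for i by (rule prob_space_sample_distr)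
  show "finite (round_samples t)" by (simp add: round_samples_def)
  fix i assume "i \<in> round_samples t"
  then obtain k j where i: "i = (t, k, j)" and k: "k < K" by (auto simp: round_samples_def)
  then have distr: "sample_distr (t, k, j) = D k" by (simp add: sample_distr_def)
  interpret prob_space "D k" by (rule D_prob[OF k])
  show "grad_noise x i \<in> borel_measurable (sample_distr i)"
    unfolding i distr grad_noise_def using G_measurable[OF k] by simp
  show "integrable (sample_distr i) (grad_noise x i)"
    unfolding i distr grad_noise_def using A2_int[OF k] by simp
  show "integral\<^sup>L (sample_distr i) (grad_noise x i) = 0"
    unfolding i distr grad_noise_def using A2_int[OF k] A2_unb[OF k] by (simp add: prob_space)
  show "(\<integral>\<^sup>+ s. ennreal ((norm (grad_noise x i s))\<^sup>2) \<partial>sample_distr i) \<le> ennreal (\<sigma>\<^sup>2)"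
    unfolding i distr grad_noise_def using A2_var[OF k] by simp
qed

lemma sum_node_samples: "(\<Sum>i\<in>node_samples t k. \<phi> i) = (\<Sum>j<b. \<phi> (t, k, j))"
proof -
  have "node_samples t k = (\<lambda>j. (t, k, j)) ` {..<b}" by (auto simp: node_samples_def)
  then show ?thesis by (simp add: sum.reindex inj_on_def)
qed

lemma sum_round_samples: "(\<Sum>i\<in>round_samples t. \<phi> i) = (\<Sum>k<K. \<Sum>j<b. \<phi> (t, k, j))"
proof -
  have "round_samples t = (\<lambda>(k, j). (t, k, j)) ` ({..<K} \<times> {..<b})"
    by (auto simp: round_samples_def)
  then have "(\<Sum>i\<in>round_samples t. \<phi> i) = (\<Sum>(k, j)\<in>{..<K} \<times> {..<b}. \<phi> (t, k, j))"
    by (simp add: sum.reindex inj_on_def case_prod_beta)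
  then show ?thesis by (simp add: sum.cartesian_product)
qed

lemma card_node_samples: "card (node_samples t k) = b"
  by (simp add: node_samples_def card_cartesian_product)

lemma card_round_samples: "card (round_samples t) = K * b"
  by (simp add: round_samples_def card_cartesian_product)

lemma node_samples_subset: "k < K \<Longrightarrow> node_samples t k \<subseteq> round_samples t"
  by (auto simp: node_samples_def round_samples_def)

lemma avg_const: "avg (\<lambda>k. c) = c"
  using K_pos by (simp add: avg_def sum_constant_scaleR)

abbreviation node_noise :: "(nat \<Rightarrow> 'a) \<Rightarrow> nat \<Rightarrow> (nat \<times> nat \<times> nat \<Rightarrow> 'b) \<Rightarrow> nat \<Rightarrow> 'a" where
  "node_noise x t y k \<equiv> (1 / real b) *\<^sub>R (\<Sum>i\<in>node_samples t k. grad_noise x i (y i))"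

abbreviation mean_noise :: "(nat \<Rightarrow> 'a) \<Rightarrow> nat \<Rightarrow> (nat \<times> nat \<times> nat \<Rightarrow> 'b) \<Rightarrow> 'a" where
  "mean_noise x t y \<equiv> (1 / (real K * real b)) *\<^sub>R (\<Sum>i\<in>round_samples t. grad_noise x i (y i))"

lemma local_step_eq:
  "local_step x (\<lambda>k j. y (t, k, j)) k = x k - \<eta> *\<^sub>R (gf k (x k) + node_noise x t y k)"
proof -
  have "(\<Sum>j<b. G k (x k) (y (t, k, j)))
      = (\<Sum>j<b. grad_noise x (t, k, j) (y (t, k, j))) + real b *\<^sub>R gf k (x k)"
    by (simp add: grad_noise_def sum_subtractf sum_constant_scaleR)
  then show ?thesis
    using b by (simp add: local_step_def sum_node_samples scaleR_add_right add.commute)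
qed

lemma avg_fedavg_step:
  "avg (fedavg_step t x (\<lambda>k j. y (t, k, j)))
     = avg x - \<eta> *\<^sub>R (avg (\<lambda>k. gf k (x k)) + mean_noise x t y)"
proof -
  have "avg (node_noise x t y) = mean_noise x t y"
    by (simp add: avg_def sum_node_samples sum_round_samples scaleR_sum_right[symmetric])
  moreover have "avg (\<lambda>k. u k - \<eta> *\<^sub>R (v k + w k)) = avg u - \<eta> *\<^sub>R (avg v + avg w)" for u v w
    by (simp add: avg_def sum_subtractf sum.distrib scaleR_diff_right scaleR_add_right
        flip: scaleR_sum_right)
  moreover have "local_step x (\<lambda>k j. y (t, k, j))
      = (\<lambda>k. x k - \<eta> *\<^sub>R (gf k (x k) + node_noise x t y k))"
    by (simp add: fun_eq_iff local_step_eq)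
  ultimately show ?thesis
    by (simp add: fedavg_step_def avg_const)
qed

lemma consensus_error_nonneg: "0 \<le> consensus_error x"
  unfolding consensus_error_def using K_pos by (intro mult_nonneg_nonneg sum_nonneg) auto

lemma consensus_error_fedavg_step_communication:
  "t mod I = 0 \<Longrightarrow> consensus_error (fedavg_step t x y) = 0"
  by (simp add: fedavg_step_def consensus_error_def avg_const)

lemma fbar_step_le:
  "fbar (z - \<eta> *\<^sub>R (h + n)) \<le> fbar z - \<eta> * (gbar z \<bullet> h) + L * \<eta>\<^sup>2 / 2 * (norm h)\<^sup>2
     + ((L * \<eta>\<^sup>2) *\<^sub>R h - \<eta> *\<^sub>R gbar z) \<bullet> n + L * \<eta>\<^sup>2 / 2 * (norm n)\<^sup>2"
proof -
  have "fbar (z - \<eta> *\<^sub>R (h + n))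
      \<le> fbar z + gbar z \<bullet> (- (\<eta> *\<^sub>R (h + n))) + L / 2 * (norm (- (\<eta> *\<^sub>R (h + n))))\<^sup>2"
    using lipschitz_gradient_upper_bound[OF has_derivative_fbar gbar_lipschitz,
        of "z - \<eta> *\<^sub>R (h + n)" z]
    by simp
  also have "\<dots> = fbar z - \<eta> * (gbar z \<bullet> h) - \<eta> * (gbar z \<bullet> n)
      + L * \<eta>\<^sup>2 / 2 * ((norm h)\<^sup>2 + 2 * (h \<bullet> n) + (norm n)\<^sup>2)"
  proof -
    have "(norm (- (\<eta> *\<^sub>R (h + n))))\<^sup>2 = \<eta>\<^sup>2 * (norm (h + n))\<^sup>2"
      by (simp add: power_mult_distrib)
    moreover have "gbar z \<bullet> (- (\<eta> *\<^sub>R (h + n))) = - \<eta> * (gbar z \<bullet> h) - \<eta> * (gbar z \<bullet> n)"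
      by (simp add: inner_add_right algebra_simps)
    ultimately show ?thesis by (simp add: power2_norm_add algebra_simps)
  qed
  finally show ?thesis by (simp add: inner_diff_left algebra_simps)
qed

lemma expected_descent_step:
  assumes fs: "\<And>z. fs \<le> fbar z"
  shows "(\<integral>\<^sup>+y. ennreal (fbar (avg (fedavg_step t x (\<lambda>k j. y (t, k, j)))) - fs)
            \<partial>PiM (round_samples t) sample_distr)
          + ennreal (\<eta> / 2 * (norm (gbar (avg x)))\<^sup>2)
        \<le> ennreal (fbar (avg x) - fs + \<eta> * L\<^sup>2 / 2 * consensus_error x
                   + L * \<eta>\<^sup>2 * \<sigma>\<^sup>2 / (2 * real b * real K))"
proof -
  interpret N: product_noise sample_distr "round_samples t" "grad_noise x" "\<sigma>\<^sup>2"
    by (rule product_noise_round)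
  define g h where "g = gbar (avg x)" and "h = avg (\<lambda>k. gf k (x k))"
  define a where "a = 1 / (real K * real b)"
  define C0 where "C0 = fbar (avg x) - fs - \<eta> * (g \<bullet> h) + L * \<eta>\<^sup>2 / 2 * (norm h)\<^sup>2"
  define c2 where "c2 = L * \<eta>\<^sup>2 / 2"
  define R where "R y = C0 + ((L * \<eta>\<^sup>2) *\<^sub>R h - \<eta> *\<^sub>R g) \<bullet> (a *\<^sub>R (\<Sum>i\<in>round_samples t. N.noise i y))
    + c2 * (norm (a *\<^sub>R (\<Sum>i\<in>round_samples t. N.noise i y)))\<^sup>2" for y
  have c2: "c2 \<ge> 0" using L by (simp add: c2_def)
  note R_integral = N.quadratic_in_noise_integral[OF subset_refl c2,
      of C0 "(L * \<eta>\<^sup>2) *\<^sub>R h - \<eta> *\<^sub>R g" a, folded R_def]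
  have R_bound: "fbar (avg (fedavg_step t x (\<lambda>k j. y (t, k, j)))) - fs \<le> R y" for y
    using fbar_step_le[of "avg x" h "a *\<^sub>R (\<Sum>i\<in>round_samples t. N.noise i y)"]
    by (simp add: R_def avg_fedavg_step C0_def c2_def g_def h_def a_def)
  have gap_nonneg: "0 \<le> fbar (avg (fedavg_step t x (\<lambda>k j. y (t, k, j)))) - fs" for y
    using fs by simp
  have "0 \<le> R y" for y using gap_nonneg[of y] R_bound[of y] by linarith
  then have "0 \<le> integral\<^sup>L (PiM (round_samples t) sample_distr) R"
    by (simp add: integral_nonneg_AE)
  moreover have "C0 + \<eta> / 2 * (norm g)\<^sup>2 \<le> fbar (avg x) - fs + \<eta> * L\<^sup>2 / 2 * consensus_error x"
    using biased_step_inner_bound[OF eta_nonneg L eta_L_le_1, of g h]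
      mult_left_mono[OF gbar_avg_minus_avg_grad_le[of x], of "\<eta> / 2"] eta_nonneg
    by (simp add: C0_def g_def h_def algebra_simps)
  moreover have "c2 * a\<^sup>2 * real (card (round_samples t)) * \<sigma>\<^sup>2
      = L * \<eta>\<^sup>2 * \<sigma>\<^sup>2 / (2 * real b * real K)"
    using K b by (simp add: c2_def a_def card_round_samples power2_eq_square field_simps)
  moreover have "(\<integral>\<^sup>+y. ennreal (fbar (avg (fedavg_step t x (\<lambda>k j. y (t, k, j)))) - fs)
            \<partial>PiM (round_samples t) sample_distr)
      \<le> ennreal (integral\<^sup>L (PiM (round_samples t) sample_distr) R)"
    by (rule nn_integral_le_integral_of_le[OF R_integral(1)]) (use gap_nonneg R_bound in auto)
  ultimately show ?thesis
    using R_integral(2) eta_nonneg by (intro add_ennreal_le_ennreal) (auto simp: g_def)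
qed

definition deviation :: "(nat \<Rightarrow> 'a) \<Rightarrow> nat \<Rightarrow> 'a" where
  "deviation x k = (x k - avg x) - \<eta> *\<^sub>R (gf k (x k) - avg (\<lambda>k. gf k (x k)))"

lemma consensus_error_fedavg_step_le:
  assumes "t mod I \<noteq> 0"
  shows "consensus_error (fedavg_step t x (\<lambda>k j. y (t, k, j)))
           \<le> (1 / real K) * (\<Sum>k<K. (norm (deviation x k - \<eta> *\<^sub>R node_noise x t y k))\<^sup>2)"
proof -
  define z where "z = local_step x (\<lambda>k j. y (t, k, j))"
  have "(\<Sum>k<K. (norm (z k - avg z))\<^sup>2)
      \<le> (\<Sum>k<K. (norm (z k - (avg x - \<eta> *\<^sub>R avg (\<lambda>k. gf k (x k)))))\<^sup>2)"
    unfolding avg_def[of z] by (rule sum_power2_norm_diff_mean_le[OF K])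
  also have "\<dots> = (\<Sum>k<K. (norm (deviation x k - \<eta> *\<^sub>R node_noise x t y k))\<^sup>2)"
    by (simp add: z_def local_step_eq deviation_def algebra_simps)
  finally have "(\<Sum>k<K. (norm (z k - avg z))\<^sup>2)
      \<le> (\<Sum>k<K. (norm (deviation x k - \<eta> *\<^sub>R node_noise x t y k))\<^sup>2)" .
  then show ?thesis
    using assms K_pos by (simp add: fedavg_step_def consensus_error_def divide_right_mono flip: z_def)
qed

lemma avg_power2_norm_deviation_le:
  assumes \<alpha>: "\<alpha> > 0"
  shows "(1 / real K) * (\<Sum>k<K. (norm (deviation x k))\<^sup>2)
     \<le> (1 + \<alpha> + 2 * (1 + 1/\<alpha>) * \<eta>\<^sup>2 * L\<^sup>2) * consensus_error x + 2 * (1 + 1/\<alpha>) * \<eta>\<^sup>2 * \<zeta>\<^sup>2"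
proof -
  define h where "h = avg (\<lambda>k. gf k (x k))"
  have "(\<Sum>k<K. (norm (deviation x k))\<^sup>2)
      \<le> (\<Sum>k<K. (1 + \<alpha>) * (norm (x k - avg x))\<^sup>2 + (1 + 1/\<alpha>) * \<eta>\<^sup>2 * (norm (gf k (x k) - h))\<^sup>2)"
  proof (intro sum_mono)
    fix k
    show "(norm (deviation x k))\<^sup>2
        \<le> (1 + \<alpha>) * (norm (x k - avg x))\<^sup>2 + (1 + 1/\<alpha>) * \<eta>\<^sup>2 * (norm (gf k (x k) - h))\<^sup>2"
      using power2_norm_diff_le_weighted[OF \<alpha>, of "x k - avg x" "\<eta> *\<^sub>R (gf k (x k) - h)"]
      by (simp add: deviation_def h_def power_mult_distrib mult.assoc)
  qed
  also have "\<dots> = (1 + \<alpha>) * (\<Sum>k<K. (norm (x k - avg x))\<^sup>2)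
      + ((1 + 1/\<alpha>) * \<eta>\<^sup>2) * (\<Sum>k<K. (norm (gf k (x k) - h))\<^sup>2)"
    by (simp add: sum.distrib sum_distrib_left mult.assoc)
  finally have "(1 / real K) * (\<Sum>k<K. (norm (deviation x k))\<^sup>2)
      \<le> (1 / real K) * ((1 + \<alpha>) * (\<Sum>k<K. (norm (x k - avg x))\<^sup>2)
        + ((1 + 1/\<alpha>) * \<eta>\<^sup>2) * (\<Sum>k<K. (norm (gf k (x k) - h))\<^sup>2))"
    using K_pos by (intro mult_left_mono) auto
  also have "\<dots> = (1 + \<alpha>) * consensus_error x
      + ((1 + 1/\<alpha>) * \<eta>\<^sup>2) * ((1 / real K) * (\<Sum>k<K. (norm (gf k (x k) - h))\<^sup>2))"
    by (simp only: consensus_error_def distrib_left mult.left_commute)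
  also have "\<dots> \<le> (1 + \<alpha>) * consensus_error x
      + ((1 + 1/\<alpha>) * \<eta>\<^sup>2) * (2 * L\<^sup>2 * consensus_error x + 2 * \<zeta>\<^sup>2)"
    using \<alpha> gradient_dispersion_le[of x] by (intro add_left_mono mult_left_mono) (auto simp: h_def)
  finally show ?thesis by (simp add: algebra_simps)
qed

lemma expected_consensus_step:
  assumes tI: "t mod I \<noteq> 0" and \<alpha>: "\<alpha> > 0"
  shows "(\<integral>\<^sup>+y. ennreal (consensus_error (fedavg_step t x (\<lambda>k j. y (t, k, j))))
            \<partial>PiM (round_samples t) sample_distr)
     \<le> ennreal ((1 + \<alpha> + 2 * (1 + 1/\<alpha>) * \<eta>\<^sup>2 * L\<^sup>2) * consensus_error x
                + 2 * (1 + 1/\<alpha>) * \<eta>\<^sup>2 * \<zeta>\<^sup>2 + \<eta>\<^sup>2 * \<sigma>\<^sup>2 / real b)"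
proof -
  interpret N: product_noise sample_distr "round_samples t" "grad_noise x" "\<sigma>\<^sup>2"
    by (rule product_noise_round)
  let ?P = "PiM (round_samples t) sample_distr"
  define Rk where "Rk k y = (norm (deviation x k))\<^sup>2
      + (- (2 * \<eta>) *\<^sub>R deviation x k) \<bullet> ((1 / real b) *\<^sub>R (\<Sum>i\<in>node_samples t k. N.noise i y))
      + \<eta>\<^sup>2 * (norm ((1 / real b) *\<^sub>R (\<Sum>i\<in>node_samples t k. N.noise i y)))\<^sup>2" for k y
  define R where "R y = (1 / real K) * (\<Sum>k<K. Rk k y)" for y
  have Rk_eq: "Rk k y = (norm (deviation x k - \<eta> *\<^sub>R node_noise x t y k))\<^sup>2" for k y
    using eta_nonneg by (simp add: Rk_def power2_norm_diff power_mult_distrib power_divide algebra_simps)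
  have Rk_integral: "integrable ?P (Rk k)"
      "integral\<^sup>L ?P (Rk k) \<le> (norm (deviation x k))\<^sup>2 + \<eta>\<^sup>2 * \<sigma>\<^sup>2 / real b" if k: "k < K" for k
  proof -
    have "\<eta>\<^sup>2 \<ge> 0" by simp
    note Q = N.quadratic_in_noise_integral[OF node_samples_subset[OF k] this,
        of "(norm (deviation x k))\<^sup>2" "- (2 * \<eta>) *\<^sub>R deviation x k" "1 / real b"]
    show "integrable ?P (Rk k)" using Q(1) by (simp add: Rk_def[abs_def])
    show "integral\<^sup>L ?P (Rk k) \<le> (norm (deviation x k))\<^sup>2 + \<eta>\<^sup>2 * \<sigma>\<^sup>2 / real b"
      using Q(2) b by (simp add: Rk_def[abs_def] card_node_samples power2_eq_square)
  qed
  have R_integrable: "integrable ?P R"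
    unfolding R_def[abs_def] using Rk_integral(1)
    by (intro integrable_mult_right Bochner_Integration.integrable_sum) auto
  have "integral\<^sup>L ?P R = (1 / real K) * (\<Sum>k<K. integral\<^sup>L ?P (Rk k))"
    unfolding R_def[abs_def] using Rk_integral(1) by simp
  also have "\<dots> \<le> (1 / real K) * (\<Sum>k<K. (norm (deviation x k))\<^sup>2 + \<eta>\<^sup>2 * \<sigma>\<^sup>2 / real b)"
    using K_pos Rk_integral(2) by (intro mult_left_mono sum_mono) auto
  also have "\<dots> = (1 / real K) * (\<Sum>k<K. (norm (deviation x k))\<^sup>2) + \<eta>\<^sup>2 * \<sigma>\<^sup>2 / real b"
    using K_pos by (simp add: sum.distrib field_simps)
  finally have R_integral: "integral\<^sup>L ?P R
      \<le> (1 / real K) * (\<Sum>k<K. (norm (deviation x k))\<^sup>2) + \<eta>\<^sup>2 * \<sigma>\<^sup>2 / real b" .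
  have "(\<integral>\<^sup>+y. ennreal (consensus_error (fedavg_step t x (\<lambda>k j. y (t, k, j)))) \<partial>?P)
      \<le> ennreal (integral\<^sup>L ?P R)"
    using consensus_error_fedavg_step_le[OF tI]
    by (intro nn_integral_le_integral_of_le[OF R_integrable consensus_error_nonneg])
      (simp add: R_def Rk_eq)
  also have "\<dots> \<le> ennreal ((1 + \<alpha> + 2 * (1 + 1/\<alpha>) * \<eta>\<^sup>2 * L\<^sup>2) * consensus_error x
                + 2 * (1 + 1/\<alpha>) * \<eta>\<^sup>2 * \<zeta>\<^sup>2 + \<eta>\<^sup>2 * \<sigma>\<^sup>2 / real b)"
    using R_integral avg_power2_norm_deviation_le[OF \<alpha>, of x] by (intro ennreal_leI) linarith
  finally show ?thesis .
qed

lemma fedavg_local_Suc: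
  "fedavg_local G K b \<eta> I x1 xi (Suc n)
     = fedavg_step (Suc n) (fedavg_local G K b \<eta> I x1 xi n) (xi (Suc n))"
  by (simp add: fedavg_step_def local_step_def avg_def Let_def fun_eq_iff)

lemma fedavg_step_cong:
  assumes "\<And>l. l < K \<Longrightarrow> x l = x' l" "\<And>l j. l < K \<Longrightarrow> j < b \<Longrightarrow> y l j = y' l j" "k < K"
  shows "fedavg_step t x y k = fedavg_step t x' y' k"
  using assms by (simp add: fedavg_step_def local_step_def avg_def)

lemma fedavg_local_cong:
  assumes "\<And>t k j. 1 \<le> t \<Longrightarrow> t \<le> n \<Longrightarrow> k < K \<Longrightarrow> j < b \<Longrightarrow> xi t k j = xi' t k j"
    and "k < K"
  shows "fedavg_local G K b \<eta> I x1 xi n k = fedavg_local G K b \<eta> I x1 xi' n k"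
  using assms
proof (induction n arbitrary: k)
  case (Suc n)
  then show ?case
    unfolding fedavg_local_Suc by (intro fedavg_step_cong) (auto simp: le_SucI)
qed simp

lemma measurable_fedavg_step:
  assumes X: "\<And>l. l < K \<Longrightarrow> (\<lambda>\<omega>. X \<omega> l) \<in> borel_measurable N"
    and Y: "\<And>l j. l < K \<Longrightarrow> j < b \<Longrightarrow> (\<lambda>\<omega>. Y \<omega> l j) \<in> measurable N S"
    and k: "k < K"
  shows "(\<lambda>\<omega>. fedavg_step t (X \<omega>) (Y \<omega>) k) \<in> borel_measurable N"
proof -
  have G_comp: "(\<lambda>\<omega>. G l (X \<omega> l) (Y \<omega> l j)) \<in> borel_measurable N" if "l < K" "j < b" for l j
    using measurable_comp[OF measurable_Pair[OF X Y] G_meas, of l l j] that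
    by (simp add: comp_def)
  have local_step: "(\<lambda>\<omega>. local_step (X \<omega>) (Y \<omega>) l) \<in> borel_measurable N" if "l < K" for l
    unfolding local_step_def using X[OF that] G_comp[OF that] by measurable
  show ?thesis
  proof (cases "t mod I = 0")
    case True
    have "(\<lambda>\<omega>. \<Sum>l<K. local_step (X \<omega>) (Y \<omega>) l) \<in> borel_measurable N"
      by (rule borel_measurable_sum) (simp add: local_step)
    then show ?thesis using True by (simp add: fedavg_step_def avg_def)
  next
    case False
    then show ?thesis using local_step[OF k] by (simp add: fedavg_step_def)
  qed
qed

lemma measurable_fedavg_local:
  assumes "\<And>t k j. 1 \<le> t \<Longrightarrow> t \<le> n \<Longrightarrow> k < K \<Longrightarrow> j < b \<Longrightarrow> Xi t k j \<in> measurable N S"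
    and "k < K"
  shows "(\<lambda>\<omega>. fedavg_local G K b \<eta> I x1 (\<lambda>t k j. Xi t k j \<omega>) n k) \<in> borel_measurable N"
  using assms
proof (induction n arbitrary: k)
  case (Suc n)
  show ?case unfolding fedavg_local_Suc
    by (rule measurable_fedavg_step) (use Suc in \<open>auto simp: le_SucI\<close>)
qed simp

definition state_space :: "(nat \<Rightarrow> 'a) measure" where
  "state_space = PiM {..<K} (\<lambda>_. borel)"

lemma measurable_restrict_state:
  "(\<And>l. l < K \<Longrightarrow> (\<lambda>\<omega>. X \<omega> l) \<in> borel_measurable N)
     \<Longrightarrow> (\<lambda>\<omega>. restrict (X \<omega>) {..<K}) \<in> measurable N state_space"
  unfolding state_space_def by (rule measurable_restrict) auto

lemma avg_measurable: "avg \<in> borel_measurable state_space"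
  unfolding avg_def[abs_def] state_space_def by measurable

lemma consensus_error_measurable: "consensus_error \<in> borel_measurable state_space"
  using avg_measurable unfolding consensus_error_def[abs_def] state_space_def by measurable

lemma avg_restrict: "avg (restrict x {..<K}) = avg x"
  by (simp add: avg_def)

lemma consensus_error_restrict: "consensus_error (restrict x {..<K}) = consensus_error x"
  by (simp add: consensus_error_def avg_restrict)

lemma fbar_measurable: "fbar \<in> borel_measurable borel"
  by (intro borel_measurable_continuous_onI continuous_at_imp_continuous_on ballI
      has_derivative_continuous[OF has_derivative_fbar])

lemma gbar_measurable: "gbar \<in> borel_measurable borel"
proof (intro borel_measurable_continuous_onI lipschitz_on_continuous_on)
  show "L-lipschitz_on UNIV gbar"
    using gbar_lipschitz L by (intro lipschitz_onI) (auto simp: dist_norm)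
qed

end

section \<open>Expectations along a run\<close>

locale fedavg_run = fedavg S D G gf f K b I L \<sigma> \<zeta> \<eta>
  for S :: "'b measure" and D and G :: "nat \<Rightarrow> 'a::euclidean_space \<Rightarrow> 'b \<Rightarrow> 'a"
    and gf f K b I L \<sigma> \<zeta> \<eta> +
  fixes M :: "'m measure" and \<xi> :: "nat \<Rightarrow> nat \<Rightarrow> nat \<Rightarrow> 'm \<Rightarrow> 'b" and T :: nat and x1 :: 'a
  assumes M_prob: "prob_space M"
    and indep: "prob_space.indep_vars M (\<lambda>_. S) (\<lambda>i. \<xi> (fst i) (fst (snd i)) (snd (snd i)))
                  ({1..T} \<times> {..<K} \<times> {..<b})"
    and distr: "\<And>t k j. t \<in> {1..T} \<Longrightarrow> k < K \<Longrightarrow> j < b \<Longrightarrow> distr M (D k) (\<xi> t k j) = D k"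
begin

sublocale P: prob_space M by (rule M_prob)

abbreviation iterate :: "nat \<Rightarrow> 'm \<Rightarrow> nat \<Rightarrow> 'a" where
  "iterate n \<omega> \<equiv> fedavg_local G K b \<eta> I x1 (\<lambda>t k j. \<xi> t k j \<omega>) n"

abbreviation sample :: "nat \<times> nat \<times> nat \<Rightarrow> 'm \<Rightarrow> 'b" where
  "sample i \<equiv> \<xi> (fst i) (fst (snd i)) (snd (snd i))"

definition past_samples :: "nat \<Rightarrow> (nat \<times> nat \<times> nat) set" where
  "past_samples t = {1..<t} \<times> {..<K} \<times> {..<b}"

definition iterate_of_samples :: "nat \<Rightarrow> (nat \<times> nat \<times> nat \<Rightarrow> 'b) \<Rightarrow> nat \<Rightarrow> 'a" where
  "iterate_of_samples n p = fedavg_local G K b \<eta> I x1 (\<lambda>t k j. p (t, k, j)) n"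

lemma sample_measurable:
  "i \<in> {1..T} \<times> {..<K} \<times> {..<b} \<Longrightarrow> sample i \<in> measurable M S"
  using indep unfolding P.indep_vars_def by auto

lemma iterate_measurable: "n \<le> T \<Longrightarrow> k < K \<Longrightarrow> (\<lambda>\<omega>. iterate n \<omega> k) \<in> borel_measurable M"
  using sample_measurable by (intro measurable_fedavg_local) auto

lemma iterate_Suc: "1 \<le> t \<Longrightarrow> iterate t \<omega> = fedavg_step t (iterate (t - 1) \<omega>) (\<lambda>k j. \<xi> t k j \<omega>)"
  using fedavg_local_Suc[of _ _ "t - 1"] by simp

lemma distr_round_samples:
  assumes t: "1 \<le> t" "t \<le> T"
  shows "distr M (PiM (round_samples t) (\<lambda>_. S)) (\<lambda>\<omega>. restrict (\<lambda>i. sample i \<omega>) (round_samples t))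
           = PiM (round_samples t) sample_distr"
proof -
  have sub: "round_samples t \<subseteq> {1..T} \<times> {..<K} \<times> {..<b}"
    using t by (auto simp: round_samples_def)
  have "(t, 0, 0) \<in> round_samples t" using K b by (simp add: round_samples_def)
  then have "distr M (PiM (round_samples t) (\<lambda>_. S)) (\<lambda>\<omega>. restrict (\<lambda>i. sample i \<omega>) (round_samples t))
      = PiM (round_samples t) (\<lambda>i. distr M S (sample i))"
    using P.indep_vars_iff_distr_eq_PiM'[of "round_samples t" sample "\<lambda>_. S"]
      P.indep_vars_subset[OF indep sub] sample_measurable sub by blast
  also have "\<dots> = PiM (round_samples t) sample_distr"
  proof (rule PiM_cong[OF refl])
    fix i assume "i \<in> round_samples t"
    then obtain k j where i: "i = (t, k, j)" and k: "k < K" and j: "j < b"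
      by (auto simp: round_samples_def)
    have "distr M S (sample i) = distr M (D k) (sample i)"
      by (rule distr_cong) (use D_sets[OF k] in auto)
    also have "\<dots> = D k" using distr[of t k j] t k j i by simp
    finally show "distr M S (sample i) = sample_distr i" using i k by (simp add: sample_distr_def)
  qed
  finally show ?thesis .
qed

lemma state_fun_cong:
  assumes \<Phi>: "\<And>x. \<Phi> (restrict x {..<K}) = \<Phi> x" and eq: "\<And>k. k < K \<Longrightarrow> x k = x' k"
  shows "\<Phi> x = \<Phi> x'"
proof -
  have "restrict x {..<K} = restrict x' {..<K}" using eq by (auto simp: restrict_def)
  then show ?thesis using \<Phi>[of x] \<Phi>[of x'] by simp
qed

lemma measurable_state_fun_iterate:
  assumes "\<Phi> \<in> borel_measurable state_space" "\<And>x. \<Phi> (restrict x {..<K}) = \<Phi> x" "n \<le> T"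
  shows "(\<lambda>\<omega>. \<Phi> (iterate n \<omega>)) \<in> borel_measurable M"
  using measurable_comp[OF measurable_restrict_state[OF iterate_measurable] assms(1)] assms(2,3)
  by (simp add: comp_def)

lemma iterate_eq_of_past_samples:
  "1 \<le> t \<Longrightarrow> k < K
     \<Longrightarrow> iterate (t - 1) \<omega> k = iterate_of_samples (t - 1) (restrict (\<lambda>i. sample i \<omega>) (past_samples t)) k"
  unfolding iterate_of_samples_def by (rule fedavg_local_cong) (auto simp: past_samples_def)

lemma measurable_step_of_samples:
  fixes \<Phi> :: "(nat \<Rightarrow> 'a) \<Rightarrow> ennreal"
  assumes \<Phi>: "\<Phi> \<in> borel_measurable state_space" "\<And>x. \<Phi> (restrict x {..<K}) = \<Phi> x"
    and t: "1 \<le> t"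
  shows "(\<lambda>z. \<Phi> (fedavg_step t (iterate_of_samples (t - 1) (fst z)) (\<lambda>k j. snd z (t, k, j))))
           \<in> borel_measurable (PiM (past_samples t) (\<lambda>_. S) \<Otimes>\<^sub>M PiM (round_samples t) (\<lambda>_. S))"
    (is "?h \<in> borel_measurable ?PP")
proof -
  have "(\<lambda>z. fedavg_step t (iterate_of_samples (t - 1) (fst z)) (\<lambda>k j. snd z (t, k, j)) k)
      \<in> borel_measurable ?PP" if k: "k < K" for k
  proof (rule measurable_fedavg_step[OF _ _ k])
    fix l assume l: "l < K"
    show "(\<lambda>z. iterate_of_samples (t - 1) (fst z) l) \<in> borel_measurable ?PP"
      unfolding iterate_of_samples_def
    proof (rule measurable_fedavg_local[OF _ l])
      fix t' k' j' assume "1 \<le> t'" "t' \<le> t - 1" "k' < K" "j' < b"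
      then have "(t', k', j') \<in> past_samples t" using t by (auto simp: past_samples_def)
      then show "(\<lambda>z. fst z (t', k', j')) \<in> measurable ?PP S" by measurable
    qed
  next
    fix l j assume "l < K" "j < b"
    then have "(t, l, j) \<in> round_samples t" by (auto simp: round_samples_def)
    then show "(\<lambda>z. snd z (t, l, j)) \<in> measurable ?PP S" by measurable
  qed
  from measurable_comp[OF measurable_restrict_state[OF this] \<Phi>(1)] show ?thesis
    by (simp add: comp_def \<Phi>(2))
qed

lemma nn_integral_iterate_step:
  fixes \<Phi> :: "(nat \<Rightarrow> 'a) \<Rightarrow> ennreal"
  assumes \<Phi>: "\<Phi> \<in> borel_measurable state_space" "\<And>x. \<Phi> (restrict x {..<K}) = \<Phi> x"
    and t: "1 \<le> t" "t \<le> T"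
  shows "(\<integral>\<^sup>+\<omega>. \<Phi> (iterate t \<omega>) \<partial>M)
    = (\<integral>\<^sup>+\<omega>. \<integral>\<^sup>+y. \<Phi> (fedavg_step t (iterate (t - 1) \<omega>) (\<lambda>k j. y (t, k, j)))
         \<partial>PiM (round_samples t) sample_distr \<partial>M)"
proof -
  let ?past = "\<lambda>\<omega>. restrict (\<lambda>i. sample i \<omega>) (past_samples t)"
  let ?now = "\<lambda>\<omega>. restrict (\<lambda>i. sample i \<omega>) (round_samples t)"
  let ?h = "\<lambda>z. \<Phi> (fedavg_step t (iterate_of_samples (t - 1) (fst z)) (\<lambda>k j. snd z (t, k, j)))"
  have step_eq: "\<Phi> (fedavg_step t (iterate (t - 1) \<omega>) y) = \<Phi> (fedavg_step t (iterate_of_samples (t - 1) (?past \<omega>)) y')"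
    if "\<And>k j. k < K \<Longrightarrow> j < b \<Longrightarrow> y k j = y' k j" for \<omega> y y'
    using that iterate_eq_of_past_samples[OF t(1)]
    by (intro state_fun_cong[of \<Phi>, OF \<Phi>(2)] fedavg_step_cong) auto
  have "\<Phi> (iterate t \<omega>) = ?h (?past \<omega>, ?now \<omega>)" for \<omega>
    unfolding iterate_Suc[OF t(1)] fst_conv snd_conv
    by (rule step_eq) (auto simp: round_samples_def)
  then have "(\<integral>\<^sup>+\<omega>. \<Phi> (iterate t \<omega>) \<partial>M) = (\<integral>\<^sup>+\<omega>. ?h (?past \<omega>, ?now \<omega>) \<partial>M)"
    by simp
  also have "\<dots> = (\<integral>\<^sup>+\<omega>. \<integral>\<^sup>+y. ?h (?past \<omega>, y) \<partial>distr M (PiM (round_samples t) (\<lambda>_. S)) ?now \<partial>M)"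
    by (rule nn_integral_indep_blocks[OF M_prob indep _ _ _ measurable_step_of_samples[OF \<Phi> t(1)]])
      (use t in \<open>auto simp: past_samples_def round_samples_def\<close>)
  also have "\<dots> = (\<integral>\<^sup>+\<omega>. \<integral>\<^sup>+y. \<Phi> (fedavg_step t (iterate (t - 1) \<omega>) (\<lambda>k j. y (t, k, j)))
         \<partial>PiM (round_samples t) sample_distr \<partial>M)"
    using step_eq by (simp add: distr_round_samples[OF t])
  finally show ?thesis .
qed

lemma measurable_nn_integral_step:
  fixes \<Phi> :: "(nat \<Rightarrow> 'a) \<Rightarrow> ennreal"
  assumes \<Phi>: "\<Phi> \<in> borel_measurable state_space" "\<And>x. \<Phi> (restrict x {..<K}) = \<Phi> x"
    and t: "1 \<le> t" "t \<le> T"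
  shows "(\<lambda>\<omega>. \<integral>\<^sup>+y. \<Phi> (fedavg_step t (iterate (t - 1) \<omega>) (\<lambda>k j. y (t, k, j)))
            \<partial>PiM (round_samples t) sample_distr) \<in> borel_measurable M"
proof -
  interpret R: prob_space "PiM (round_samples t) sample_distr"
    by (rule prob_space_PiM) (simp add: prob_space_sample_distr)
  have "sets (PiM (round_samples t) sample_distr) = sets (PiM (round_samples t) (\<lambda>_. S))"
    by (rule sets_PiM_cong) (auto simp: round_samples_def sample_distr_def D_sets)
  then have "(\<lambda>z. \<Phi> (fedavg_step t (iterate_of_samples (t - 1) (fst z)) (\<lambda>k j. snd z (t, k, j))))
      \<in> borel_measurable (PiM (past_samples t) (\<lambda>_. S) \<Otimes>\<^sub>M PiM (round_samples t) sample_distr)"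
    using measurable_step_of_samples[OF \<Phi> t(1)] by (simp cong: measurable_cong_sets)
  from R.borel_measurable_nn_integral_fst[OF this]
  have inner: "(\<lambda>p. \<integral>\<^sup>+y. \<Phi> (fedavg_step t (iterate_of_samples (t - 1) p) (\<lambda>k j. y (t, k, j)))
      \<partial>PiM (round_samples t) sample_distr) \<in> borel_measurable (PiM (past_samples t) (\<lambda>_. S))"
    by simp
  have "(\<lambda>\<omega>. restrict (\<lambda>i. sample i \<omega>) (past_samples t)) \<in> measurable M (PiM (past_samples t) (\<lambda>_. S))"
    using t sample_measurable by (intro measurable_restrict) (auto simp: past_samples_def)
  from measurable_compose[OF this inner] have "(\<lambda>\<omega>. \<integral>\<^sup>+y. \<Phi> (fedavg_step t (iterate_of_samples (t - 1)
      (restrict (\<lambda>i. sample i \<omega>) (past_samples t))) (\<lambda>k j. y (t, k, j)))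
      \<partial>PiM (round_samples t) sample_distr) \<in> borel_measurable M" .
  moreover have "\<Phi> (fedavg_step t (iterate_of_samples (t - 1) (restrict (\<lambda>i. sample i \<omega>) (past_samples t))) y)
      = \<Phi> (fedavg_step t (iterate (t - 1) \<omega>) y)" for \<omega> y
    using iterate_eq_of_past_samples[OF t(1)]
    by (intro state_fun_cong[of \<Phi>, OF \<Phi>(2)] fedavg_step_cong) auto
  ultimately show ?thesis by simp
qed

definition exp_gap :: "real \<Rightarrow> nat \<Rightarrow> ennreal" where
  "exp_gap fs n = (\<integral>\<^sup>+\<omega>. ennreal (fbar (avg (iterate n \<omega>)) - fs) \<partial>M)"

definition exp_grad :: "nat \<Rightarrow> ennreal" where
  "exp_grad n = (\<integral>\<^sup>+\<omega>. ennreal ((norm (gbar (avg (iterate n \<omega>))))\<^sup>2) \<partial>M)"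

definition exp_consensus :: "nat \<Rightarrow> ennreal" where
  "exp_consensus n = (\<integral>\<^sup>+\<omega>. ennreal (consensus_error (iterate n \<omega>)) \<partial>M)"

lemma gap_fun_measurable: "(\<lambda>x. ennreal (fbar (avg x) - c)) \<in> borel_measurable state_space"
  using measurable_compose[OF avg_measurable fbar_measurable] by measurable

lemma grad_fun_measurable: "(\<lambda>x. ennreal (c * (norm (gbar (avg x)))\<^sup>2)) \<in> borel_measurable state_space"
  using measurable_compose[OF avg_measurable gbar_measurable] by measurable

lemma consensus_iterate_measurable:
  "n \<le> T \<Longrightarrow> (\<lambda>\<omega>. consensus_error (iterate n \<omega>)) \<in> borel_measurable M"
  by (rule measurable_state_fun_iterate[OF consensus_error_measurable consensus_error_restrict])

lemma exp_gap_step: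
  assumes fs: "\<And>z. fs \<le> fbar z" and t: "1 \<le> t" "t \<le> T"
  shows "exp_gap fs t + ennreal (\<eta> / 2) * exp_grad (t - 1)
     \<le> exp_gap fs (t - 1) + ennreal (\<eta> * L\<^sup>2 / 2) * exp_consensus (t - 1)
        + ennreal (L * \<eta>\<^sup>2 * \<sigma>\<^sup>2 / (2 * real b * real K))"
proof -
  define C1 where "C1 = L * \<eta>\<^sup>2 * \<sigma>\<^sup>2 / (2 * real b * real K)"
  define gap where "gap \<omega> = fbar (avg (iterate (t - 1) \<omega>)) - fs" for \<omega>
  have C1: "C1 \<ge> 0" using L eta_nonneg by (simp add: C1_def)
  have prev: "t - 1 \<le> T" using t by simp
  have gap_measurable: "(\<lambda>\<omega>. ennreal (gap \<omega>)) \<in> borel_measurable M"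
    unfolding gap_def
    by (rule measurable_state_fun_iterate[OF gap_fun_measurable _ prev]) (simp add: avg_restrict)
  have grad_measurable: "(\<lambda>\<omega>. ennreal (\<eta> / 2 * (norm (gbar (avg (iterate (t - 1) \<omega>))))\<^sup>2))
      \<in> borel_measurable M"
    by (rule measurable_state_fun_iterate[OF grad_fun_measurable _ prev]) (simp add: avg_restrict)
  let ?step_gap = "\<lambda>\<omega>. \<integral>\<^sup>+y. ennreal (fbar (avg (fedavg_step t (iterate (t - 1) \<omega>) (\<lambda>k j. y (t, k, j)))) - fs)
      \<partial>PiM (round_samples t) sample_distr"
  have "exp_gap fs t = (\<integral>\<^sup>+\<omega>. ?step_gap \<omega> \<partial>M)"
    unfolding exp_gap_def by (rule nn_integral_iterate_step[OF gap_fun_measurable _ t]) (simp add: avg_restrict)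
  moreover have "?step_gap \<in> borel_measurable M"
    by (rule measurable_nn_integral_step[OF gap_fun_measurable _ t]) (simp add: avg_restrict)
  moreover have "ennreal (\<eta> / 2) * exp_grad (t - 1)
      = (\<integral>\<^sup>+\<omega>. ennreal (\<eta> / 2 * (norm (gbar (avg (iterate (t - 1) \<omega>))))\<^sup>2) \<partial>M)"
  proof -
    have "(\<lambda>\<omega>. ennreal ((norm (gbar (avg (iterate (t - 1) \<omega>))))\<^sup>2)) \<in> borel_measurable M"
      using measurable_state_fun_iterate[OF grad_fun_measurable[of 1] _ prev] by (simp add: avg_restrict)
    then show ?thesis
      unfolding exp_grad_def using eta_nonneg
      by (simp add: nn_integral_cmult[symmetric] ennreal_mult[symmetric])
  qed
  ultimately have "exp_gap fs t + ennreal (\<eta> / 2) * exp_grad (t - 1)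
      = (\<integral>\<^sup>+\<omega>. ?step_gap \<omega> + ennreal (\<eta> / 2 * (norm (gbar (avg (iterate (t - 1) \<omega>))))\<^sup>2) \<partial>M)"
    using grad_measurable by (simp add: nn_integral_add)
  also have "\<dots> \<le> (\<integral>\<^sup>+\<omega>. ennreal (gap \<omega>) + ennreal (\<eta> * L\<^sup>2 / 2 * consensus_error (iterate (t - 1) \<omega>) + C1) \<partial>M)"
    using fs consensus_error_nonneg C1 eta_nonneg
    by (intro nn_integral_mono order_trans[OF expected_descent_step[OF fs]])
      (simp add: gap_def C1_def flip: ennreal_plus)
  also have "\<dots> = exp_gap fs (t - 1)
      + (\<integral>\<^sup>+\<omega>. ennreal (\<eta> * L\<^sup>2 / 2 * consensus_error (iterate (t - 1) \<omega>) + C1) \<partial>M)"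
    using gap_measurable consensus_iterate_measurable[OF prev]
    by (simp add: nn_integral_add exp_gap_def gap_def)
  also have "(\<integral>\<^sup>+\<omega>. ennreal (\<eta> * L\<^sup>2 / 2 * consensus_error (iterate (t - 1) \<omega>) + C1) \<partial>M)
      = ennreal (\<eta> * L\<^sup>2 / 2) * exp_consensus (t - 1) + ennreal C1"
    unfolding exp_consensus_def using consensus_iterate_measurable[OF prev] consensus_error_nonneg C1 eta_nonneg
    by (intro P.nn_integral_ennreal_affine) auto
  finally show ?thesis by (simp add: C1_def add.assoc)
qed

lemma exp_consensus_zero: "exp_consensus 0 = 0"
  by (simp add: exp_consensus_def consensus_error_def avg_const)

lemma exp_consensus_communication: "1 \<le> t \<Longrightarrow> t mod I = 0 \<Longrightarrow> exp_consensus t = 0"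
  by (simp add: exp_consensus_def iterate_Suc consensus_error_fedavg_step_communication)

lemma exp_consensus_step:
  assumes t: "1 \<le> t" "t \<le> T" and tI: "t mod I \<noteq> 0" and \<alpha>: "\<alpha> > 0"
  shows "exp_consensus t \<le> ennreal (1 + \<alpha> + 2 * (1 + 1/\<alpha>) * \<eta>\<^sup>2 * L\<^sup>2) * exp_consensus (t - 1)
                + ennreal (2 * (1 + 1/\<alpha>) * \<eta>\<^sup>2 * \<zeta>\<^sup>2 + \<eta>\<^sup>2 * \<sigma>\<^sup>2 / real b)"
proof -
  define q c where "q = 1 + \<alpha> + 2 * (1 + 1/\<alpha>) * \<eta>\<^sup>2 * L\<^sup>2"
    and "c = 2 * (1 + 1/\<alpha>) * \<eta>\<^sup>2 * \<zeta>\<^sup>2 + \<eta>\<^sup>2 * \<sigma>\<^sup>2 / real b"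
  have "q \<ge> 0" "c \<ge> 0" using \<alpha> by (simp_all add: q_def c_def)
  have consensus_fun: "(\<lambda>x. ennreal (consensus_error x)) \<in> borel_measurable state_space"
    using consensus_error_measurable by measurable
  have "exp_consensus t = (\<integral>\<^sup>+\<omega>. \<integral>\<^sup>+y. ennreal (consensus_error (fedavg_step t (iterate (t - 1) \<omega>)
      (\<lambda>k j. y (t, k, j)))) \<partial>PiM (round_samples t) sample_distr \<partial>M)"
    unfolding exp_consensus_def
    by (rule nn_integral_iterate_step[OF consensus_fun _ t]) (simp add: consensus_error_restrict)
  also have "\<dots> \<le> (\<integral>\<^sup>+\<omega>. ennreal (q * consensus_error (iterate (t - 1) \<omega>) + c) \<partial>M)"
    using expected_consensus_step[OF tI \<alpha>] by (intro nn_integral_mono) (simp add: q_def c_def add.assoc)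
  also have "\<dots> = ennreal q * exp_consensus (t - 1) + ennreal c"
    unfolding exp_consensus_def using consensus_iterate_measurable t consensus_error_nonneg \<open>q \<ge> 0\<close> \<open>c \<ge> 0\<close>
    by (intro P.nn_integral_ennreal_affine) auto
  finally show ?thesis by (simp add: q_def c_def)
qed

definition consensus_increment :: real where
  "consensus_increment = 10 * (real I - 1) * (\<eta>\<^sup>2 * \<zeta>\<^sup>2) + 6 * (\<eta>\<^sup>2 * \<sigma>\<^sup>2 / real b)"

lemma consensus_increment_nonneg: "consensus_increment \<ge> 0"
  using I by (simp add: consensus_increment_def)

lemma exp_consensus_le: "n \<le> T \<Longrightarrow> exp_consensus n \<le> ennreal (real (n mod I) * consensus_increment)"
proof (induction n)
  case (Suc n)
  show ?case
  proof (cases "Suc n mod I = 0")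
    case True
    then show ?thesis by (simp add: exp_consensus_communication)
  next
    case False
    define \<alpha> where "\<alpha> = 1 / (2 * (real I - 1))"
    define q where "q = 1 + \<alpha> + 2 * (1 + 1/\<alpha>) * \<eta>\<^sup>2 * L\<^sup>2"
    have I2: "real I \<ge> 2" using False I by (cases "I = 1") auto
    have mod_Suc: "Suc n mod I = Suc (n mod I)" using False by (simp add: mod_Suc split: if_splits)
    then have "real (n mod I) \<le> real I - 2" using I mod_less_divisor[of I "Suc n"] by linarith
    moreover have "\<eta>\<^sup>2 * L\<^sup>2 * (real I)\<^sup>2 \<le> 1/81"
      using power_mono[OF stepsize, of 2] eta_nonneg L by (simp add: power_mult_distrib power_divide)
    ultimately have recursion: "q * (real (n mod I) * consensus_increment)
        + (2 * (1 + 1/\<alpha>) * \<eta>\<^sup>2 * \<zeta>\<^sup>2 + \<eta>\<^sup>2 * \<sigma>\<^sup>2 / real b)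
        \<le> real (Suc n mod I) * consensus_increment"
      using consensus_recursion_arith[OF I2 _ _ _ _ _ _ \<alpha>_def, of "real (n mod I)" "\<eta>\<^sup>2 * L\<^sup>2"
          "\<eta>\<^sup>2 * \<zeta>\<^sup>2" "\<eta>\<^sup>2 * \<sigma>\<^sup>2 / real b"]
      by (simp add: q_def consensus_increment_def mod_Suc algebra_simps)
    have "\<alpha> > 0" "q \<ge> 0" using I2 by (simp_all add: \<alpha>_def q_def)
    have "exp_consensus (Suc n) \<le> ennreal q * exp_consensus n
        + ennreal (2 * (1 + 1/\<alpha>) * \<eta>\<^sup>2 * \<zeta>\<^sup>2 + \<eta>\<^sup>2 * \<sigma>\<^sup>2 / real b)"
      using exp_consensus_step[OF _ Suc.prems False \<open>\<alpha> > 0\<close>] by (simp add: q_def)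
    also have "\<dots> \<le> ennreal q * ennreal (real (n mod I) * consensus_increment)
        + ennreal (2 * (1 + 1/\<alpha>) * \<eta>\<^sup>2 * \<zeta>\<^sup>2 + \<eta>\<^sup>2 * \<sigma>\<^sup>2 / real b)"
      using Suc by (intro add_mono mult_left_mono) auto
    also have "\<dots> \<le> ennreal (real (Suc n mod I) * consensus_increment)"
      using recursion \<open>\<alpha> > 0\<close> \<open>q \<ge> 0\<close> consensus_increment_nonneg
      by (simp add: ennreal_mult[symmetric] ennreal_plus[symmetric] del: ennreal_plus)
    finally show ?thesis .
  qed
qed (simp add: exp_consensus_zero)

lemma sum_exp_consensus_le:
  assumes "I dvd T"
  shows "(\<Sum>t<T. exp_consensus t) \<le> ennreal (real T * (real I - 1) / 2 * consensus_increment)"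
proof -
  obtain m where T: "T = m * I" using assms by (auto simp: dvd_def mult.commute)
  have "(\<Sum>t<T. exp_consensus t) \<le> (\<Sum>t<T. ennreal (real (t mod I) * consensus_increment))"
    by (intro sum_mono exp_consensus_le) simp
  also have "\<dots> = ennreal ((\<Sum>t<T. real (t mod I)) * consensus_increment)"
    using consensus_increment_nonneg by (simp add: sum_ennreal sum_distrib_right)
  also have "(\<Sum>t<T. real (t mod I)) = real T * (real I - 1) / 2"
    unfolding T using sum_mod_period[OF I, of m] by simp
  finally show ?thesis .
qed

lemma exp_gap_telescope:
  assumes fs: "\<And>z. fs \<le> fbar z"
  shows "n \<le> T \<Longrightarrow> exp_gap fs n + ennreal (\<eta> / 2) * (\<Sum>t<n. exp_grad t)
     \<le> exp_gap fs 0 + ennreal (\<eta> * L\<^sup>2 / 2) * (\<Sum>t<n. exp_consensus t)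
        + ennreal (real n * (L * \<eta>\<^sup>2 * \<sigma>\<^sup>2 / (2 * real b * real K)))"
proof (induction n)
  case (Suc n)
  define C1 where "C1 = L * \<eta>\<^sup>2 * \<sigma>\<^sup>2 / (2 * real b * real K)"
  have C1: "C1 \<ge> 0" using L by (simp add: C1_def)
  have "exp_gap fs (Suc n) + ennreal (\<eta> / 2) * (\<Sum>t<Suc n. exp_grad t)
      = (exp_gap fs (Suc n) + ennreal (\<eta> / 2) * exp_grad n) + ennreal (\<eta> / 2) * (\<Sum>t<n. exp_grad t)"
    by (simp add: distrib_left ac_simps)
  also have "\<dots> \<le> (exp_gap fs n + ennreal (\<eta> * L\<^sup>2 / 2) * exp_consensus n + ennreal C1)
      + ennreal (\<eta> / 2) * (\<Sum>t<n. exp_grad t)"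
    using exp_gap_step[OF fs, of "Suc n"] Suc.prems by (intro add_right_mono) (simp add: C1_def)
  also have "\<dots> \<le> exp_gap fs 0 + ennreal (\<eta> * L\<^sup>2 / 2) * (\<Sum>t<Suc n. exp_consensus t)
      + (ennreal (real n * C1) + ennreal C1)"
    using Suc by (simp add: C1_def distrib_left ac_simps add_left_mono)
  also have "ennreal (real n * C1) + ennreal C1 = ennreal (real (Suc n) * C1)"
    using C1 by (simp add: distrib_right flip: ennreal_plus)
  finally show ?case by (simp add: C1_def)
qed simp

lemma exp_gap_zero: "exp_gap fs 0 = ennreal (fbar x1 - fs)"
  by (simp add: exp_gap_def avg_const P.emeasure_space_1)

lemma sum_exp_grad_le:
  assumes fs: "\<And>z. fs \<le> fbar z" and TI: "I dvd T"
  shows "ennreal (\<eta> / 2) * (\<Sum>t<T. exp_grad t)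
     \<le> ennreal (fbar x1 - fs + \<eta> * L\<^sup>2 / 2 * (real T * (real I - 1) / 2 * consensus_increment)
                + real T * (L * \<eta>\<^sup>2 * \<sigma>\<^sup>2 / (2 * real b * real K)))"
proof -
  have nonneg: "0 \<le> fbar x1 - fs" "0 \<le> \<eta> * L\<^sup>2 / 2" "0 \<le> real T * (real I - 1) / 2 * consensus_increment"
    "0 \<le> real T * (L * \<eta>\<^sup>2 * \<sigma>\<^sup>2 / (2 * real b * real K))"
    using fs[of x1] eta_nonneg I L consensus_increment_nonneg by auto
  have "ennreal (\<eta> / 2) * (\<Sum>t<T. exp_grad t) \<le> exp_gap fs T + ennreal (\<eta> / 2) * (\<Sum>t<T. exp_grad t)"
    by simp
  also have "\<dots> \<le> exp_gap fs 0 + ennreal (\<eta> * L\<^sup>2 / 2) * (\<Sum>t<T. exp_consensus t)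
      + ennreal (real T * (L * \<eta>\<^sup>2 * \<sigma>\<^sup>2 / (2 * real b * real K)))"
    by (rule exp_gap_telescope[OF fs order_refl])
  also have "\<dots> \<le> ennreal (fbar x1 - fs)
      + ennreal (\<eta> * L\<^sup>2 / 2) * ennreal (real T * (real I - 1) / 2 * consensus_increment)
      + ennreal (real T * (L * \<eta>\<^sup>2 * \<sigma>\<^sup>2 / (2 * real b * real K)))"
    using sum_exp_consensus_le[OF TI] by (intro add_mono mult_left_mono) (auto simp: exp_gap_zero)
  also have "\<dots> = ennreal (fbar x1 - fs + \<eta> * L\<^sup>2 / 2 * (real T * (real I - 1) / 2 * consensus_increment)
                + real T * (L * \<eta>\<^sup>2 * \<sigma>\<^sup>2 / (2 * real b * real K)))"
    using nonneg by (simp add: ennreal_mult[symmetric] ennreal_plus[symmetric] del: ennreal_plus)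
  finally show ?thesis .
qed

lemma sum_grad_norm_eq_sum_exp_grad:
  "(\<Sum>t\<in>{1..T}. \<integral>\<^sup>+ \<omega>. ennreal ((norm ((1 / real K) *\<^sub>R (\<Sum>k<K.
      gf k (fedavg_avg G K b \<eta> I x1 (\<lambda>t k j. \<xi> t k j \<omega>) t))))\<^sup>2) \<partial>M) = (\<Sum>t<T. exp_grad t)"
  by (simp add: sum.atLeast1_atMost_eq exp_grad_def fedavg_avg_def gbar_def avg_def)

lemma fedavg_convergence:
  assumes T: "T \<ge> 1" and TI: "I dvd T" and eta_eq: "\<eta> = sqrt (real b * real K / real T)"
    and bdd: "bdd_below (range fbar)"
  shows "ennreal (1 / real T) *
           (\<Sum>t\<in>{1..T}. \<integral>\<^sup>+ \<omega>. ennreal ((norm ((1 / real K) *\<^sub>R (\<Sum>k<K.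
               gf k (fedavg_avg G K b \<eta> I x1 (\<lambda>t k j. \<xi> t k j \<omega>) t))))\<^sup>2) \<partial>M)
         \<le> ennreal (2 * (fbar x1 - (INF x. fbar x)) / (sqrt (real b * real K) * sqrt (real T))
           + 2 * L * \<sigma>\<^sup>2 / (sqrt (real b * real K) * sqrt (real T))
           + 3 * L\<^sup>2 * real b * real K * (real I - 1) / real T * \<sigma>\<^sup>2
           + 5 * L\<^sup>2 * real b * real K * (real I - 1)\<^sup>2 / real T * \<zeta>\<^sup>2)"
proof -
  define fs where "fs = (INF x. fbar x)"
  define W where "W = fbar x1 - fs + \<eta> * L\<^sup>2 / 2 * (real T * (real I - 1) / 2 * consensus_increment)
                + real T * (L * \<eta>\<^sup>2 * \<sigma>\<^sup>2 / (2 * real b * real K))"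
  have fs: "fs \<le> fbar z" for z unfolding fs_def by (rule cINF_lower[OF bdd]) simp
  have T_pos: "real T > 0" and eta_pos: "\<eta> > 0" using T K b eta_eq by auto
  have "W \<ge> 0" unfolding W_def using fs[of x1] eta_nonneg I L consensus_increment_nonneg by auto
  have "ennreal (1 / real T) * (\<Sum>t<T. exp_grad t)
      = ennreal (1 / real T * (2 / \<eta>)) * (ennreal (\<eta> / 2) * (\<Sum>t<T. exp_grad t))"
    using eta_pos T_pos by (simp add: mult.assoc[symmetric] flip: ennreal_mult)
  also have "\<dots> \<le> ennreal (1 / real T * (2 / \<eta>)) * ennreal W"
    unfolding W_def by (intro mult_left_mono sum_exp_grad_le[OF fs TI]) simp
  also have "\<dots> = ennreal (1 / real T * (2 / \<eta> * W))"
    using eta_pos T_pos \<open>W \<ge> 0\<close> by (simp add: ennreal_mult[symmetric] mult.assoc del: ennreal_mult)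
  also have "\<dots> \<le> ennreal (2 * (fbar x1 - fs) / (sqrt (real b * real K) * sqrt (real T))
        + 2 * L * \<sigma>\<^sup>2 / (sqrt (real b * real K) * sqrt (real T))
        + 3 * L\<^sup>2 * real b * real K * (real I - 1) / real T * \<sigma>\<^sup>2
        + 5 * L\<^sup>2 * real b * real K * (real I - 1)\<^sup>2 / real T * \<zeta>\<^sup>2)"
    unfolding W_def consensus_increment_def unfolding eta_eq using T_pos K b I L
    by (intro ennreal_leI fedavg_rate_bound) auto
  finally show ?thesis by (simp only: sum_grad_norm_eq_sum_exp_grad fs_def)
qed

end

theorem theoremB:
  fixes M :: "'m measure"
    and S :: "'b measure"
    and D :: "nat \<Rightarrow> 'b measure"
    and F :: "nat \<Rightarrow> 'a::euclidean_space \<Rightarrow> 'b \<Rightarrow> real"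
    and G :: "nat \<Rightarrow> 'a \<Rightarrow> 'b \<Rightarrow> 'a"
    and f :: "nat \<Rightarrow> 'a \<Rightarrow> real"
    and gf :: "nat \<Rightarrow> 'a \<Rightarrow> 'a"
    and \<xi> :: "nat \<Rightarrow> nat \<Rightarrow> nat \<Rightarrow> 'm \<Rightarrow> 'b"
    and K b I T :: nat
    and L \<sigma> \<zeta> \<eta> :: real
    and x1 :: 'a
  assumes K: "K \<ge> 1" and b: "b \<ge> 1" and I: "I \<ge> 1" and T: "T \<ge> 1"
    and TI: "I dvd T"
    and L: "L \<ge> 0"
    and eta: "\<eta> = sqrt (real b * real K / real T)"
    and Tbig: "real T \<ge> 81 * L\<^sup>2 * (real I)\<^sup>2 * real b * real K"
    \<comment> \<open>distributions of the local data\<close>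
    and D_prob: "\<And>k. k < K \<Longrightarrow> prob_space (D k)"
    and D_sets: "\<And>k. k < K \<Longrightarrow> sets (D k) = sets S"
    \<comment> \<open>stochastic losses f^(k)(x;xi), their gradients, and f^(k)(x) = E f^(k)(x;xi)\<close>
    and F_int: "\<And>k x. k < K \<Longrightarrow> integrable (D k) (F k x)"
    and f_def: "\<And>k x. k < K \<Longrightarrow> f k x = (\<integral>s. F k x s \<partial>D k)"
    and F_grad: "\<And>k x s. k < K \<Longrightarrow> s \<in> space S \<Longrightarrow>
                   ((\<lambda>z. F k z s) has_derivative (\<lambda>h. G k x s \<bullet> h)) (at x)"
    and G_meas: "\<And>k. k < K \<Longrightarrow> (\<lambda>p. G k (fst p) (snd p)) \<in> borel_measurable (borel \<Otimes>\<^sub>M S)"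
    and f_grad: "\<And>k x. k < K \<Longrightarrow> (f k has_derivative (\<lambda>h. gf k x \<bullet> h)) (at x)"
    \<comment> \<open>f^* = inf f > -infinity\<close>
    and f_bdd: "bdd_below (range (\<lambda>x. (1 / real K) * (\<Sum>k<K. f k x)))"
    \<comment> \<open>Assumption 1\<close>
    and A1: "\<And>k x y. k < K \<Longrightarrow>
       (\<integral>\<^sup>+ s. ennreal ((norm (G k x s - G k y s))\<^sup>2) \<partial>D k) \<le> ennreal (L\<^sup>2 * (norm (x - y))\<^sup>2)"
    \<comment> \<open>Assumption 2\<close>
    and A2_int: "\<And>k x. k < K \<Longrightarrow> integrable (D k) (G k x)"
    and A2_unb: "\<And>k x. k < K \<Longrightarrow> (\<integral>s. G k x s \<partial>D k) = gf k x"
    and A2_var: "\<And>k x. k < K \<Longrightarrow>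
       (\<integral>\<^sup>+ s. ennreal ((norm (G k x s - gf k x))\<^sup>2) \<partial>D k) \<le> ennreal (\<sigma>\<^sup>2)"
    and A2_het: "\<And>k l x. k < K \<Longrightarrow> l < K \<Longrightarrow> (norm (gf k x - gf l x))\<^sup>2 \<le> \<zeta>\<^sup>2"
    \<comment> \<open>i.i.d. samples, independent across nodes, times and minibatch slots\<close>
    and M_prob: "prob_space M"
    and indep: "prob_space.indep_vars M (\<lambda>_. S) (\<lambda>i. \<xi> (fst i) (fst (snd i)) (snd (snd i)))
                  ({1..T} \<times> {..<K} \<times> {..<b})"
    and distr: "\<And>t k j. t \<in> {1..T} \<Longrightarrow> k < K \<Longrightarrow> j < b \<Longrightarrow> distr M (D k) (\<xi> t k j) = D k"
  shows "ennreal (1 / real T) *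
           (\<Sum>t\<in>{1..T}. \<integral>\<^sup>+ \<omega>. ennreal ((norm ((1 / real K) *\<^sub>R (\<Sum>k<K.
               gf k (fedavg_avg G K b \<eta> I x1 (\<lambda>t k j. \<xi> t k j \<omega>) t))))\<^sup>2) \<partial>M)
         \<le> ennreal (
             2 * ((1 / real K) * (\<Sum>k<K. f k x1) - (INF x. (1 / real K) * (\<Sum>k<K. f k x)))
               / (sqrt (real b * real K) * sqrt (real T))
           + 2 * L * \<sigma>\<^sup>2 / (sqrt (real b * real K) * sqrt (real T))
           + 3 * L\<^sup>2 * real b * real K * (real I - 1) / real T * \<sigma>\<^sup>2
           + 5 * L\<^sup>2 * real b * real K * (real I - 1)\<^sup>2 / real T * \<zeta>\<^sup>2)"
proof -
  have stepsize: "\<eta> * L * real I \<le> 1/9"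
    using stepsize_condition[of "real T" "real b" "real K" L "real I"] T L Tbig by (simp add: eta)
  interpret fedavg_run S D G gf f K b I L \<sigma> \<zeta> \<eta> M \<xi> T x1
    by (intro fedavg_run.intro fedavg.intro fedavg_run_axioms.intro) (fact | simp add: eta)+
  have "bdd_below (range fbar)" using f_bdd by (simp add: fbar_def[abs_def])
  from fedavg_convergence[OF T TI eta this] show ?thesis by (simp only: fbar_def)
qed

end
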